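(* Let $\beta>1$ be such that the generating sequence $g(\beta)$ is eventually periodic, let $(F_\beta,\mathcal{L}_\beta)$ be the right Fischer cover of the beta-shift $\mathsf{X}_\beta$, and let $\pi\colon \mathsf{X}_{F_\beta}\to\mathsf{X}_\beta$ be the covering map $\pi(x)=(\mathcal{L}_\beta(x_i))_{i\in\mathbb{Z}}$. If $g(\beta)$ is periodic, then $\pi$ is $1$ to $1$, and if $g(\beta)$ is not periodic, then $\pi$ is $2$ to $1$.
   Context: For $\beta>1$, let $e(\beta)$ be the $\beta$-expansion of $1$ (defined by $r_1=\{\beta\}$, $x_1=\lfloor\beta\rfloor$, $r_n=\{\beta r_{n-1}\}$, $x_n=\lfloor\beta r_{n-1}\rfloor$, $e(\beta)=x_1x_2\cdots$). The generating sequence is $g(\beta)=e(\beta)$ if $e(\beta)$ has infinitely many nonzero terms, and $g(\beta)=(a_1\cdots a_{k-1}(a_k-1))^\infty$ if $e(\beta)=a_1\cdots a_k00\cdots$ with $a_k\ne0$. The beta-shift $\mathsf{X}_\beta$ is the two-sided shift space over $\{0,\ldots,\lceil\beta\rceil-1\}$ whose language is the set of all finite words $x_n(t)\cdots x_m(t)$ of $\beta$-expansions of numbers $t\in[0,1]$; equivalently, a one-sided sequence $y_1y_2\cdots$ is a right-ray of $\mathsf{X}_\beta$ iff $y_ky_{k+1}\cdots\le g(\beta)$ lexicographically for all $k$. A sequence is periodic if $g_{i+p}=g_i$ for some $p\ge1$ and all $i\ge1$, eventually periodic if this holds for all $i\ge N$ for some $N$. When $g(\beta)$ is eventually periodic,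 $\mathsf{X}_\beta$ is sofic and its right Fischer cover is its unique minimal right-resolving follower-separated presentation by a finite labeled graph $(F_\beta,\mathcal{L}_\beta)$; $\mathsf{X}_{F_\beta}$ is the edge shift of the underlying graph. The factor map $\pi$ is called $1$ to $1$ if it is injective, and $2$ to $1$ if every point of $\mathsf{X}_\beta$ has at most two preimages and some point has exactly two. *)

theory Defs
  imports Complex_Main
begin

text \<open>Sequences are indexed from 0: index n here corresponds to index n+1 in the paper.\<close>

fun beta_r :: "real \<Rightarrow> nat \<Rightarrow> real" where
  "beta_r b 0 = frac b"
| "beta_r b (Suc n) = frac (b * beta_r b n)"

fun beta_e :: "real \<Rightarrow> nat \<Rightarrow> nat" where
  "beta_e b 0 = nat \<lfloor>b\<rfloor>"
| "beta_e b (Suc n) = nat \<lfloor>b * beta_r b n\<rfloor>"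

definition gen_seq :: "real \<Rightarrow> nat \<Rightarrow> nat" where
  "gen_seq b =
     (if infinite {n. beta_e b n \<noteq> 0} then beta_e b
      else (let K = Max {n. beta_e b n \<noteq> 0} in
            (\<lambda>n. if n mod Suc K = K then beta_e b K - 1 else beta_e b (n mod Suc K))))"

definition periodic_seq :: "(nat \<Rightarrow> nat) \<Rightarrow> bool" where
  "periodic_seq g \<longleftrightarrow> (\<exists>p\<ge>1. \<forall>i. g (i + p) = g i)"

definition eventually_periodic_seq :: "(nat \<Rightarrow> nat) \<Rightarrow> bool" where
  "eventually_periodic_seq g \<longleftrightarrow> (\<exists>p\<ge>1. \<exists>N. \<forall>i\<ge>N. g (i + p) = g i)"

definition lex_le :: "(nat \<Rightarrow> nat) \<Rightarrow> (nat \<Rightarrow> nat) \<Rightarrow> bool" where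
  "lex_le x y \<longleftrightarrow> x = y \<or> (\<exists>n. (\<forall>i<n. x i = y i) \<and> x n < y n)"

definition beta_shift :: "real \<Rightarrow> (int \<Rightarrow> nat) set" where
  "beta_shift b = {y. (\<forall>k. int (y k) < \<lceil>b\<rceil>) \<and>
                      (\<forall>k. lex_le (\<lambda>i. y (k + int i)) (gen_seq b))}"

record lgraph =
  verts :: "nat set"
  edges :: "nat set"
  src :: "nat \<Rightarrow> nat"
  tgt :: "nat \<Rightarrow> nat"
  lab :: "nat \<Rightarrow> nat"

definition finite_lgraph :: "lgraph \<Rightarrow> bool" where
  "finite_lgraph G \<longleftrightarrow> finite (verts G) \<and> finite (edges G) \<and>
     (\<forall>e\<in>edges G. src G e \<in> verts G \<and> tgt G e \<in> verts G)"

definition edge_shift :: "lgraph \<Rightarrow> (int \<Rightarrow> nat) set" where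
  "edge_shift G = {x. \<forall>i. x i \<in> edges G \<and> tgt G (x i) = src G (x (i + 1))}"

definition cover_map :: "lgraph \<Rightarrow> (int \<Rightarrow> nat) \<Rightarrow> (int \<Rightarrow> nat)" where
  "cover_map G x = (\<lambda>i. lab G (x i))"

definition presents :: "lgraph \<Rightarrow> (int \<Rightarrow> nat) set \<Rightarrow> bool" where
  "presents G X \<longleftrightarrow> finite_lgraph G \<and> cover_map G ` edge_shift G = X"

definition right_resolving :: "lgraph \<Rightarrow> bool" where
  "right_resolving G \<longleftrightarrow>
     (\<forall>e1\<in>edges G. \<forall>e2\<in>edges G. src G e1 = src G e2 \<and> lab G e1 = lab G e2 \<longrightarrow> e1 = e2)"

fun is_path_from :: "lgraph \<Rightarrow> nat \<Rightarrow> nat list \<Rightarrow> bool" where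
  "is_path_from G v [] = True"
| "is_path_from G v (e # es) \<longleftrightarrow> e \<in> edges G \<and> src G e = v \<and> is_path_from G (tgt G e) es"

definition follower_set :: "lgraph \<Rightarrow> nat \<Rightarrow> nat list set" where
  "follower_set G v = {map (lab G) p | p. is_path_from G v p}"

definition follower_separated :: "lgraph \<Rightarrow> bool" where
  "follower_separated G \<longleftrightarrow>
     (\<forall>u\<in>verts G. \<forall>v\<in>verts G. follower_set G u = follower_set G v \<longrightarrow> u = v)"

definition right_fischer_cover :: "(int \<Rightarrow> nat) set \<Rightarrow> lgraph \<Rightarrow> bool" where
  "right_fischer_cover X G \<longleftrightarrow>
     presents G X \<and> right_resolving G \<and> follower_separated G \<and>
     (\<forall>H. presents H X \<and> right_resolving H \<longrightarrow> card (verts G) \<le> card (verts H))"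

definition one_to_one :: "lgraph \<Rightarrow> bool" where
  "one_to_one G \<longleftrightarrow> inj_on (cover_map G) (edge_shift G)"

definition two_to_one :: "lgraph \<Rightarrow> (int \<Rightarrow> nat) set \<Rightarrow> bool" where
  "two_to_one G X \<longleftrightarrow>
     (\<forall>y\<in>X. finite {x\<in>edge_shift G. cover_map G x = y} \<and>
             card {x\<in>edge_shift G. cover_map G x = y} \<le> 2) \<and>
     (\<exists>y\<in>X. card {x\<in>edge_shift G. cover_map G x = y} = 2)"

end

theory Submission
  imports Defs "HOL-Library.Omega_Words_Fun"
begin

text \<open>Write g for the generating sequence; the beta-shift consists of the points all of whose right
  rays are lexicographically at most g. Its follower sets of words are the sets C n of admissible
  words bounded by the suffixes of g, finitely many because g is eventually periodic. In the
  Fischer cover every vertex has some C n as follower set and every C n occurs: an edge labelled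
  g n leads from C n to C (n + 1), a smaller label leads to the root C 0.

  A lift of a point is determined by the follower sets along it, and these sets are monotone in
  the inclusion order along the point; so two lifts that meet the root arbitrarily far in the past
  coincide. Two lifts that avoid the root far in the past both read g there, and a bounded number
  of letters of g determines the suffix of g being read, so they coincide as well: every point has
  at most two lifts. If g has period p, reading g for at most p steps returns to the root, so every
  lift meets the root and the covering map is injective. If g is not periodic, the point repeating
  the periodic tail of g has a lift cycling through the vertices of that tail, which avoids the root,
  and another one obtained by repeating a loop through the root.\<close>

text \<open>The library declares this equation as an unrestricted introduction rule, which sends blast
  into unbounded search on unrelated goals.\<close>
declare build_split [rule del]

section \<open>Lexicographic order\<close>

lemma suffix_build [simp]: "suffix (Suc 0) (a ## w) = w"
  by (rule ext) simp

lemma lex_le_refl [simp]: "lex_le s s"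
  by (simp add: lex_le_def)

lemma lex_le_iff_not_greater:
  "lex_le s t \<longleftrightarrow> \<not> (\<exists>n. (\<forall>i<n. s i = t i) \<and> t n < s n)"
proof
  assume "lex_le s t"
  then show "\<not> (\<exists>n. (\<forall>i<n. s i = t i) \<and> t n < s n)"
    unfolding lex_le_def by (metis less_asym linorder_neqE_nat)
next
  assume no_greater: "\<not> (\<exists>n. (\<forall>i<n. s i = t i) \<and> t n < s n)"
  show "lex_le s t"
  proof (cases "s = t")
    case False
    then have "\<exists>i. s i \<noteq> t i" by auto
    define n where "n = (LEAST i. s i \<noteq> t i)"
    have "s n \<noteq> t n" "\<forall>i<n. s i = t i"
      unfolding n_def using LeastI_ex[OF \<open>\<exists>i. s i \<noteq> t i\<close>] not_less_Least by auto
    with no_greater show ?thesis unfolding lex_le_def by (metis linorder_neqE_nat)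
  qed simp
qed

lemma lex_le_build [simp]: "lex_le (a ## s) (b ## t) \<longleftrightarrow> a < b \<or> (a = b \<and> lex_le s t)"
proof -
  have "(\<exists>n. (\<forall>i<n. (a ## s) i = (b ## t) i) \<and> (b ## t) n < (a ## s) n) \<longleftrightarrow>
        b < a \<or> (a = b \<and> (\<exists>n. (\<forall>i<n. s i = t i) \<and> t n < s n))"
    (is "?l \<longleftrightarrow> ?r")
  proof
    assume ?l
    then obtain n where agree: "\<forall>i<n. (a ## s) i = (b ## t) i" and less: "(b ## t) n < (a ## s) n"
      by blast
    show ?r
    proof (cases n)
      case (Suc m)
      have "\<forall>i<m. s i = t i" using agree Suc by (metis Suc_mono build.simps(2))
      then show ?r using agree less Suc by auto
    qed (use less in simp)
  next
    assume ?r
    then show ?l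
    proof (elim disjE conjE exE)
      fix n assume "a = b" "\<forall>i<n. s i = t i" "t n < s n"
      then show ?l by (intro exI[of _ "Suc n"]) (auto simp: less_Suc_eq_0_disj)
    qed (auto intro!: exI[of _ 0])
  qed
  then show ?thesis unfolding lex_le_iff_not_greater by auto
qed

lemma lex_le_unfold:
  "lex_le s t \<longleftrightarrow> s 0 < t 0 \<or> (s 0 = t 0 \<and> lex_le (suffix 1 s) (suffix 1 t))"
  using lex_le_build[of "s 0" "suffix 1 s" "t 0" "suffix 1 t"] by simp

lemma zero_lex_le: "lex_le (\<lambda>_. 0) s"
  unfolding lex_le_iff_not_greater by simp

lemma lex_le_trans:
  assumes "lex_le s t" and "lex_le t r"
  shows "lex_le s r"
proof (cases "s = t \<or> t = r")
  case False
  with assms obtain n m where n: "\<forall>i<n. s i = t i" "s n < t n" and m: "\<forall>i<m. t i = r i" "t m < r m"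
    unfolding lex_le_def by blast
  have "\<forall>i<min n m. s i = r i" "s (min n m) < r (min n m)"
    using n m by (cases n m rule: linorder_cases; simp)+
  then show ?thesis unfolding lex_le_def by blast
qed (use assms in auto)

lemma lex_le_antisym:
  assumes "lex_le s t" and "lex_le t s"
  shows "s = t"
proof (rule ccontr)
  assume "s \<noteq> t"
  with assms obtain n m where n: "\<forall>i<n. s i = t i" "s n < t n" and m: "\<forall>i<m. t i = s i" "t m < s m"
    unfolding lex_le_def by blast
  then show False by (cases n m rule: linorder_cases) auto
qed

definition word_lex_le :: "nat list \<Rightarrow> (nat \<Rightarrow> nat) \<Rightarrow> bool" where
  "word_lex_le u s \<longleftrightarrow> lex_le (u \<frown> (\<lambda>_. 0)) s"

lemma word_lex_le_Nil [simp]: "word_lex_le [] s"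
  by (simp add: word_lex_le_def zero_lex_le)

lemma word_lex_le_Cons [simp]:
  "word_lex_le (c # u) s \<longleftrightarrow> c < s 0 \<or> (c = s 0 \<and> word_lex_le u (suffix 1 s))"
  unfolding word_lex_le_def by (subst lex_le_unfold) simp

lemma word_lex_le_trans: "word_lex_le u s \<Longrightarrow> lex_le s t \<Longrightarrow> word_lex_le u t"
  unfolding word_lex_le_def by (rule lex_le_trans)

lemma conc_zeros_lex_le: "lex_le (u \<frown> (\<lambda>_. 0)) (u \<frown> w)"
  by (induction u) (simp_all add: zero_lex_le)

lemma word_lex_le_append: "word_lex_le (u @ v) s \<Longrightarrow> word_lex_le u s"
  unfolding word_lex_le_def
  using conc_zeros_lex_le[of u "v \<frown> (\<lambda>_. 0)"] by (auto intro: lex_le_trans)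

lemma word_lex_le_prefix: "lex_le s t \<Longrightarrow> word_lex_le (prefix k s) t"
  unfolding word_lex_le_def
  using conc_zeros_lex_le[of "prefix k s" "suffix k s"] by (auto intro: lex_le_trans)

lemma lex_le_if_word_lex_le_prefixes:
  assumes "\<And>k. word_lex_le (prefix k s) t"
  shows "lex_le s t"
  unfolding lex_le_iff_not_greater
proof
  assume "\<exists>n. (\<forall>i<n. s i = t i) \<and> t n < s n"
  then obtain n where n: "\<forall>i<n. s i = t i" "t n < s n" by blast
  define z where "z = prefix (Suc n) s \<frown> (\<lambda>_. 0)"
  have agree: "z i = s i" if "i \<le> n" for i
    using that unfolding z_def by (simp add: subsequence_def del: upt_Suc)
  have "\<not> lex_le z t"
    unfolding lex_le_iff_not_greater not_not
  proof (intro exI[of _ n] conjI allI impI)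
    show "z i = t i" if "i < n" for i using that agree n(1) by simp
    show "t n < z n" using agree[of n] n(2) by simp
  qed
  with assms[of "Suc n"] show False unfolding word_lex_le_def z_def by blast
qed

definition admissible :: "(nat \<Rightarrow> nat) \<Rightarrow> nat list \<Rightarrow> bool" where
  "admissible g u \<longleftrightarrow> (\<forall>j. word_lex_le (drop j u) g)"

lemma admissible_Nil [simp]: "admissible g []"
  by (simp add: admissible_def)

lemma admissible_Cons [simp]: "admissible g (c # u) \<longleftrightarrow> word_lex_le (c # u) g \<and> admissible g u"
  unfolding admissible_def by (metis drop0 drop_Suc_Cons not0_implies_Suc)

lemma admissible_word_lex_le: "admissible g u \<Longrightarrow> word_lex_le u g"
  unfolding admissible_def by (metis drop0)

lemma admissible_append: "admissible g (u @ v) \<Longrightarrow> admissible g u"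
  unfolding admissible_def by (metis drop_append word_lex_le_append)

section \<open>Paths and follower sets in labelled graphs\<close>

fun path_end :: "lgraph \<Rightarrow> nat \<Rightarrow> nat list \<Rightarrow> nat" where
  "path_end G v [] = v"
| "path_end G v (e # es) = path_end G (tgt G e) es"

lemma is_path_from_append:
  "is_path_from G v (p @ q) \<longleftrightarrow> is_path_from G v p \<and> is_path_from G (path_end G v p) q"
  by (induction p arbitrary: v) auto

lemma path_end_append: "path_end G v (p @ q) = path_end G (path_end G v p) q"
  by (induction p arbitrary: v) auto

lemma path_end_in_verts:
  "finite_lgraph G \<Longrightarrow> v \<in> verts G \<Longrightarrow> is_path_from G v p \<Longrightarrow> path_end G v p \<in> verts G"
  by (induction p arbitrary: v) (auto simp: finite_lgraph_def)

lemma path_nth: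
  "is_path_from G v p \<Longrightarrow> k < length p \<Longrightarrow>
   p ! k \<in> edges G \<and> src G (p ! k) = path_end G v (take k p) \<and> tgt G (p ! k) = path_end G v (take (Suc k) p)"
proof (induction p arbitrary: v k)
  case (Cons e p)
  then show ?case by (cases k) auto
qed simp

lemma path_split_labels:
  assumes "is_path_from G u p" and "map (lab G) p = w @ x"
  obtains p1 p2 where "p = p1 @ p2" "map (lab G) p1 = w" "map (lab G) p2 = x"
    "is_path_from G u p1" "is_path_from G (path_end G u p1) p2"
proof
  show "p = take (length w) p @ drop (length w) p" by simp
  show "map (lab G) (take (length w) p) = w" "map (lab G) (drop (length w) p) = x"
    using assms(2) by (metis append_eq_conv_conj take_map, metis append_eq_conv_conj drop_map)
  show "is_path_from G u (take (length w) p)"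
    "is_path_from G (path_end G u (take (length w) p)) (drop (length w) p)"
    using assms(1) is_path_from_append[of G u "take (length w) p" "drop (length w) p"] by auto
qed

lemma paths_eq_if_labels_eq:
  "right_resolving G \<Longrightarrow> is_path_from G v p \<Longrightarrow> is_path_from G v q \<Longrightarrow>
   map (lab G) p = map (lab G) q \<Longrightarrow> p = q"
proof (induction p arbitrary: v q)
  case (Cons e p)
  then obtain e' q' where q: "q = e' # q'" by (cases q) auto
  with Cons.prems have "e = e'" unfolding right_resolving_def by auto
  with Cons.prems q have "p = q'" by (intro Cons.IH[of "tgt G e"]) auto
  with \<open>e = e'\<close> q show ?case by simp
qed simp

lemma path_labels_in_follower_set: "is_path_from G v p \<Longrightarrow> map (lab G) p \<in> follower_set G v"
  unfolding follower_set_def by auto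

lemma mem_follower_set_iff: "w \<in> follower_set G v \<longleftrightarrow> (\<exists>p. is_path_from G v p \<and> w = map (lab G) p)"
  unfolding follower_set_def by blast

lemma Nil_in_follower_set [simp]: "[] \<in> follower_set G v"
  using path_labels_in_follower_set[of G v "[]"] by simp

lemma singleton_in_follower_set_iff:
  "[c] \<in> follower_set G v \<longleftrightarrow> (\<exists>e\<in>edges G. src G e = v \<and> lab G e = c)"
proof
  assume "[c] \<in> follower_set G v"
  then obtain p where "is_path_from G v p" "[c] = map (lab G) p" unfolding mem_follower_set_iff by metis
  then show "\<exists>e\<in>edges G. src G e = v \<and> lab G e = c" by (cases p) auto
next
  assume "\<exists>e\<in>edges G. src G e = v \<and> lab G e = c"
  then obtain e where "is_path_from G v [e]" "[c] = map (lab G) [e]" by auto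
  then show "[c] \<in> follower_set G v" by (metis path_labels_in_follower_set)
qed

lemma follower_set_tgt:
  assumes "right_resolving G" and "e \<in> edges G"
  shows "follower_set G (tgt G e) = {u. lab G e # u \<in> follower_set G (src G e)}"
proof (intro set_eqI iffI; simp)
  fix u assume "u \<in> follower_set G (tgt G e)"
  then obtain q where "is_path_from G (tgt G e) q" "u = map (lab G) q" unfolding mem_follower_set_iff by metis
  with assms have "is_path_from G (src G e) (e # q)" "lab G e # u = map (lab G) (e # q)" by auto
  then show "lab G e # u \<in> follower_set G (src G e)" by (metis path_labels_in_follower_set)
next
  fix u assume "lab G e # u \<in> follower_set G (src G e)"
  then obtain p where p: "is_path_from G (src G e) p" "lab G e # u = map (lab G) p"
    unfolding mem_follower_set_iff by metis
  then obtain e' q where pq: "p = e' # q" by (cases p) auto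
  with p assms have "e' = e" unfolding right_resolving_def by auto
  with p pq have "is_path_from G (tgt G e) q" "u = map (lab G) q" by auto
  then show "u \<in> follower_set G (tgt G e)" by (metis path_labels_in_follower_set)
qed

lemma follower_set_path_end:
  assumes "right_resolving G"
  shows "is_path_from G v p \<Longrightarrow>
    follower_set G (path_end G v p) = {u. map (lab G) p @ u \<in> follower_set G v}"
proof (induction p arbitrary: v)
  case (Cons e p)
  then have e: "e \<in> edges G" "src G e = v" "is_path_from G (tgt G e) p" by auto
  have "follower_set G (path_end G v (e # p)) = {u. map (lab G) p @ u \<in> follower_set G (tgt G e)}"
    using Cons.IH[OF e(3)] by simp
  also have "\<dots> = {u. map (lab G) (e # p) @ u \<in> follower_set G v}"
    using follower_set_tgt[OF assms e(1)] e(2) by simp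
  finally show ?case .
qed simp

definition terminal_verts :: "lgraph \<Rightarrow> nat list \<Rightarrow> nat set" where
  "terminal_verts G w =
     {path_end G u p | u p. u \<in> verts G \<and> is_path_from G u p \<and> map (lab G) p = w}"

lemma path_end_in_terminal_verts:
  "u \<in> verts G \<Longrightarrow> is_path_from G u p \<Longrightarrow> path_end G u p \<in> terminal_verts G (map (lab G) p)"
  unfolding terminal_verts_def by (intro CollectI exI[of _ u] exI[of _ p]) simp

lemma terminal_verts_subset:
  assumes "finite_lgraph G"
  shows "terminal_verts G w \<subseteq> verts G"
  unfolding terminal_verts_def using path_end_in_verts[OF assms] by blast

lemma finite_terminal_verts:
  assumes "finite_lgraph G"
  shows "finite (terminal_verts G w)"
  by (rule finite_subset[OF terminal_verts_subset[OF assms]]) (use assms in \<open>simp add: finite_lgraph_def\<close>)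

lemma terminal_verts_Nil: "terminal_verts G [] = verts G"
proof
  show "terminal_verts G [] \<subseteq> verts G" unfolding terminal_verts_def by auto
  show "verts G \<subseteq> terminal_verts G []"
    using path_end_in_terminal_verts[of _ G "[]"] by auto
qed

lemma terminal_verts_append_ne:
  assumes "t \<in> terminal_verts G w" and "x \<in> follower_set G t"
  shows "terminal_verts G (w @ x) \<noteq> {}"
proof -
  obtain u p where up: "t = path_end G u p" "u \<in> verts G" "is_path_from G u p" "map (lab G) p = w"
    using assms(1) unfolding terminal_verts_def by blast
  obtain q where q: "is_path_from G t q" "x = map (lab G) q"
    using assms(2) unfolding mem_follower_set_iff by metis
  have "is_path_from G u (p @ q)" using up q is_path_from_append by auto
  then have "path_end G u (p @ q) \<in> terminal_verts G (w @ x)"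
    unfolding terminal_verts_def mem_Collect_eq
    by (intro exI[of _ u] exI[of _ "p @ q"]) (use up q in simp)
  then show ?thesis by blast
qed

text \<open>Since G is right-resolving, a terminal vertex of w @ x is determined by the terminal vertex
  of w from which the unique path labelled x starts.\<close>
lemma card_terminal_verts_append:
  assumes "finite_lgraph G" and "right_resolving G"
  shows "card (terminal_verts G (w @ x)) \<le> card {t \<in> terminal_verts G w. x \<in> follower_set G t}"
proof -
  define S where "S = {t \<in> terminal_verts G w. x \<in> follower_set G t}"
  define path where "path t = (SOME q. is_path_from G t q \<and> map (lab G) q = x)" for t
  have "terminal_verts G (w @ x) \<subseteq> (\<lambda>t. path_end G t (path t)) ` S"
  proof
    fix v assume "v \<in> terminal_verts G (w @ x)"
    then obtain u p where up: "v = path_end G u p" "u \<in> verts G" "is_path_from G u p" "map (lab G) p = w @ x"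
      unfolding terminal_verts_def by blast
    obtain p1 p2 where p: "p = p1 @ p2" "map (lab G) p1 = w" "map (lab G) p2 = x"
      "is_path_from G u p1" "is_path_from G (path_end G u p1) p2"
      by (rule path_split_labels[OF up(3,4)])
    define t where "t = path_end G u p1"
    have "x \<in> follower_set G t"
      unfolding t_def using path_labels_in_follower_set[OF p(5)] p(3) by simp
    moreover have "t \<in> terminal_verts G w"
      unfolding t_def using path_end_in_terminal_verts[OF up(2) p(4)] p(2) by simp
    ultimately have t: "t \<in> S" "x \<in> follower_set G t" unfolding S_def by blast+
    have "is_path_from G t p2 \<and> map (lab G) p2 = x" unfolding t_def using p(3,5) by simp
    then have "is_path_from G t (path t) \<and> map (lab G) (path t) = x"
      unfolding path_def by (rule someI)
    then have "path t = p2"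
      using paths_eq_if_labels_eq[OF assms(2)] p(3,5) unfolding t_def by metis
    then have "v = path_end G t (path t)" using up(1) p(1) unfolding t_def by (simp add: path_end_append)
    then show "v \<in> (\<lambda>t. path_end G t (path t)) ` S" by (rule rev_image_eqI[OF t(1)])
  qed
  moreover have "finite S" unfolding S_def using finite_terminal_verts[OF assms(1)] by simp
  ultimately have "card (terminal_verts G (w @ x)) \<le> card ((\<lambda>t. path_end G t (path t)) ` S)"
    by (intro card_mono) simp_all
  also have "\<dots> \<le> card S" by (rule card_image_le) fact
  finally show ?thesis unfolding S_def .
qed

text \<open>Appending a word that lies in the follower set of one terminal vertex of w but not of another
  strictly decreases the number of terminal vertices; so a word with the least nonzero number of
  terminal vertices has exactly one.\<close>
lemma synchronizing_word:
  assumes "finite_lgraph G" and "right_resolving G" and "follower_separated G" and "verts G \<noteq> {}"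
  shows "\<exists>w v. terminal_verts G w = {v}"
proof -
  have "terminal_verts G [] \<noteq> {}" using assms(4) by (simp add: terminal_verts_Nil)
  then obtain w where ne: "terminal_verts G w \<noteq> {}"
    and least: "\<And>w'. terminal_verts G w' \<noteq> {} \<Longrightarrow> card (terminal_verts G w) \<le> card (terminal_verts G w')"
    using ex_has_least_nat[of "\<lambda>w. terminal_verts G w \<noteq> {}" "[]" "\<lambda>w. card (terminal_verts G w)"]
    by blast
  have unique: "a = b" if ab: "a \<in> terminal_verts G w" "b \<in> terminal_verts G w" for a b
  proof (rule ccontr)
    assume "a \<noteq> b"
    moreover have "a \<in> verts G" "b \<in> verts G" using ab terminal_verts_subset[OF assms(1)] by auto
    ultimately have "follower_set G a \<noteq> follower_set G b"
      using assms(3) unfolding follower_separated_def by blast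
    then obtain a' b' where ab': "a' \<in> terminal_verts G w" "b' \<in> terminal_verts G w"
      "\<not> follower_set G a' \<subseteq> follower_set G b'"
      using ab by (meson subset_antisym)
    then obtain x where x: "x \<in> follower_set G a'" "x \<notin> follower_set G b'" by blast
    have "card (terminal_verts G (w @ x)) \<le> card {t \<in> terminal_verts G w. x \<in> follower_set G t}"
      by (rule card_terminal_verts_append[OF assms(1,2)])
    also have "\<dots> < card (terminal_verts G w)"
      using ab'(2) x(2) by (intro psubset_card_mono finite_terminal_verts[OF assms(1)]) auto
    finally show False using least[OF terminal_verts_append_ne[OF ab'(1) x(1)]] by simp
  qed
  obtain v where v: "v \<in> terminal_verts G w" using ne by blast
  then have "terminal_verts G w = {v}" using unique[OF _ v] by blast
  then show ?thesis by blast
qed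

definition restrict_verts :: "lgraph \<Rightarrow> nat set \<Rightarrow> lgraph" where
  "restrict_verts G V = G\<lparr>verts := V, edges := {e \<in> edges G. src G e \<in> V \<and> tgt G e \<in> V}\<rparr>"

lemma edge_shift_restrict_verts:
  "x \<in> edge_shift (restrict_verts G V) \<longleftrightarrow> x \<in> edge_shift G \<and> (\<forall>i. src G (x i) \<in> V)"
  unfolding edge_shift_def restrict_verts_def by auto

lemma cover_map_restrict_verts [simp]: "cover_map (restrict_verts G V) = cover_map G"
  unfolding restrict_verts_def cover_map_def by simp

lemma right_resolving_restrict_verts: "right_resolving G \<Longrightarrow> right_resolving (restrict_verts G V)"
  unfolding right_resolving_def restrict_verts_def by simp

lemma finite_lgraph_restrict_verts:
  "finite_lgraph G \<Longrightarrow> V \<subseteq> verts G \<Longrightarrow> finite_lgraph (restrict_verts G V)"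
  unfolding finite_lgraph_def restrict_verts_def by (auto intro: finite_subset)

definition reach :: "lgraph \<Rightarrow> nat \<Rightarrow> nat set" where
  "reach G v = {path_end G v p | p. is_path_from G v p}"

lemma start_in_reach: "v \<in> reach G v"
  unfolding reach_def by (auto intro!: exI[of _ "[]"])

lemma tgt_in_reach:
  assumes "u \<in> reach G v" and "e \<in> edges G" and "src G e = u"
  shows "tgt G e \<in> reach G v"
proof -
  obtain p where p: "u = path_end G v p" "is_path_from G v p" using assms(1) unfolding reach_def by blast
  then have "is_path_from G v (p @ [e])" "tgt G e = path_end G v (p @ [e])"
    using assms(2,3) by (simp_all add: is_path_from_append path_end_append)
  then show ?thesis unfolding reach_def by blast
qed

lemma reach_subset: "finite_lgraph G \<Longrightarrow> v \<in> verts G \<Longrightarrow> reach G v \<subseteq> verts G"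
  unfolding reach_def using path_end_in_verts by blast

lemma nat_mod_int_succ:
  assumes "0 < L"
  shows "nat ((t + 1) mod int L) = (if nat (t mod int L) + 1 < L then nat (t mod int L) + 1 else 0)"
proof -
  have eq: "(t + 1) mod int L = (t mod int L + 1) mod int L" by (simp add: mod_add_left_eq)
  have r: "0 \<le> t mod int L" "t mod int L < int L" using assms by simp_all
  show ?thesis
  proof (cases "nat (t mod int L) + 1 < L")
    case True
    then have "(t mod int L + 1) mod int L = t mod int L + 1" using r by (intro mod_pos_pos_trivial) linarith+
    then show ?thesis using eq r True by (simp add: nat_add_distrib)
  next
    case False
    then have "t mod int L + 1 = int L" using r by linarith
    then show ?thesis using eq False by simp
  qed
qed

text \<open>Following the labels of s from v; the edge taken at each step exists because the vertex
  reached after n steps has the words following the prefix of length n as followers.\<close>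
lemma one_sided_path:
  assumes "right_resolving G" and "\<And>n. prefix n s \<in> follower_set G v"
  shows "\<exists>ed. src G (ed 0) = v \<and> (\<forall>n. ed n \<in> edges G \<and> lab G (ed n) = s n \<and> tgt G (ed n) = src G (ed (Suc n)))"
proof -
  define step where "step n u = (SOME e. e \<in> edges G \<and> src G e = u \<and> lab G e = s n)" for n u
  define vert where "vert = rec_nat v (\<lambda>n u. tgt G (step n u))"
  have vert_simps: "vert 0 = v" "vert (Suc n) = tgt G (step n (vert n))" for n
    unfolding vert_def by simp_all
  have step_ok: "step n (vert n) \<in> edges G \<and> src G (step n (vert n)) = vert n \<and> lab G (step n (vert n)) = s n"
    if F: "follower_set G (vert n) = {u. prefix n s @ u \<in> follower_set G v}" for n
  proof -
    have "[s n] \<in> follower_set G (vert n)"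
      using assms(2)[of "Suc n"] unfolding F by (simp add: subsequence_def)
    then have "\<exists>e. e \<in> edges G \<and> src G e = vert n \<and> lab G e = s n"
      unfolding singleton_in_follower_set_iff by blast
    then show ?thesis unfolding step_def by (rule someI_ex)
  qed
  have "follower_set G (vert n) = {u. prefix n s @ u \<in> follower_set G v}" for n
  proof (induction n)
    case (Suc n)
    then show ?case
      using follower_set_tgt[OF assms(1)] step_ok[OF Suc.IH] by (simp add: vert_simps subsequence_def)
  qed (simp add: vert_simps)
  then have step: "step n (vert n) \<in> edges G \<and> src G (step n (vert n)) = vert n \<and> lab G (step n (vert n)) = s n"
    for n by (rule step_ok)
  have "src G (step 0 (vert 0)) = v" using step[of 0] vert_simps(1) by simp
  moreover have "step n (vert n) \<in> edges G \<and> lab G (step n (vert n)) = s n \<and>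
      tgt G (step n (vert n)) = src G (step (Suc n) (vert (Suc n)))" for n
    using step[of n] step[of "Suc n"] vert_simps(2)[of n] by simp
  ultimately show ?thesis by (intro exI[of _ "\<lambda>n. step n (vert n)"]) blast
qed

lemma periodic_loop_edge_shift:
  assumes "\<And>n. ed n \<in> edges G \<and> tgt G (ed n) = src G (ed (Suc n))"
    and "a < b" and "src G (ed a) = src G (ed b)"
  shows "(\<lambda>t. ed (a + nat ((t - int a) mod int (b - a)))) \<in> edge_shift G"
proof -
  define r where "r t = nat ((t - int a) mod int (b - a))" for t
  have r_succ: "r (t + 1) = (if r t + 1 < b - a then r t + 1 else 0)" for t
    using nat_mod_int_succ[of "b - a" "t - int a"] assms(2) unfolding r_def by (simp add: algebra_simps)
  have r_less: "r t < b - a" for t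
    unfolding r_def using assms(2) by (simp add: nat_less_iff)
  have "tgt G (ed (a + r t)) = src G (ed (a + r (t + 1)))" for t
  proof (cases "r t + 1 < b - a")
    case True
    then show ?thesis using assms(1)[of "a + r t"] r_succ[of t] by simp
  next
    case False
    then have "Suc (a + r t) = b" using r_less[of t] assms(2) by simp
    then show ?thesis using assms(1)[of "a + r t"] r_succ[of t] False assms(3) by simp
  qed
  then show ?thesis unfolding edge_shift_def r_def using assms(1) by simp
qed

lemma lift_from_vertex_sequence:
  assumes "finite_lgraph G" "right_resolving G" "follower_separated G"
    and "\<And>t. vert t \<in> verts G" "\<And>t. [y t] \<in> follower_set G (vert t)"
    and "\<And>t. follower_set G (vert (t + 1)) = {u. y t # u \<in> follower_set G (vert t)}"
  shows "\<exists>x\<in>edge_shift G. cover_map G x = y \<and> (\<forall>t. src G (x t) = vert t)"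
proof -
  define x where "x t = (SOME e. e \<in> edges G \<and> src G e = vert t \<and> lab G e = y t)" for t
  have x: "x t \<in> edges G \<and> src G (x t) = vert t \<and> lab G (x t) = y t" for t
  proof -
    have "\<exists>e. e \<in> edges G \<and> src G e = vert t \<and> lab G e = y t"
      using assms(5) singleton_in_follower_set_iff by metis
    then show ?thesis unfolding x_def by (rule someI_ex)
  qed
  have "tgt G (x t) = src G (x (t + 1))" for t
  proof -
    have "follower_set G (tgt G (x t)) = follower_set G (vert (t + 1))"
      using follower_set_tgt[OF assms(2), of "x t"] x assms(6) by simp
    moreover have "tgt G (x t) \<in> verts G" using assms(1) x unfolding finite_lgraph_def by blast
    ultimately show ?thesis using assms(3,4) x unfolding follower_separated_def by metis
  qed
  then have "x \<in> edge_shift G" unfolding edge_shift_def using x by simp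
  moreover have "cover_map G x = y" unfolding cover_map_def using x by simp
  ultimately show ?thesis using x by blast
qed

section \<open>Shifts bounded by a sequence\<close>

definition right_ray :: "(int \<Rightarrow> nat) \<Rightarrow> int \<Rightarrow> nat \<Rightarrow> nat" where
  "right_ray y k = (\<lambda>i. y (k + int i))"

definition window :: "(int \<Rightarrow> nat) \<Rightarrow> int \<Rightarrow> nat \<Rightarrow> nat list" where
  "window y k n = prefix n (right_ray y k)"

lemma window_Suc: "window y k (Suc n) = y k # window y (k + 1) n"
  unfolding window_def subsequence_def right_ray_def map_upt_Suc by (simp add: ac_simps)

lemma window_Suc_right: "window y k (Suc n) = window y k n @ [y (k + int n)]"
  unfolding window_def subsequence_def right_ray_def by simp

definition lex_shift :: "(nat \<Rightarrow> nat) \<Rightarrow> (int \<Rightarrow> nat) set" where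
  "lex_shift g = {y. \<forall>k. lex_le (right_ray y k) g}"

definition language :: "(int \<Rightarrow> nat) set \<Rightarrow> nat list set" where
  "language X = {window y k n | y k n. y \<in> X}"

definition word_follower_set :: "(int \<Rightarrow> nat) set \<Rightarrow> nat list \<Rightarrow> nat list set" where
  "word_follower_set X w = {u. w @ u \<in> language X}"

lemma window_in_language: "y \<in> X \<Longrightarrow> window y k n \<in> language X"
  unfolding language_def by blast

lemma edge_shift_window_path:
  assumes "x \<in> edge_shift G"
  shows "is_path_from G (src G (x k)) (window x k n) \<and>
    path_end G (src G (x k)) (window x k n) = src G (x (k + int n))"
proof (induction n arbitrary: k)
  case (Suc n)
  have "x k \<in> edges G" "tgt G (x k) = src G (x (k + 1))" using assms unfolding edge_shift_def by auto
  with Suc.IH[of "k + 1"] show ?case by (simp add: window_Suc add.assoc)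
qed (simp add: window_def)

lemma map_lab_window: "map (lab G) (window x k n) = window (cover_map G x) k n"
  by (simp add: window_def subsequence_def right_ray_def cover_map_def)

locale parry_sequence =
  fixes g :: "nat \<Rightarrow> nat"
  assumes suffix_lex_le: "\<And>m. lex_le (suffix m g) g"
    and nonzero_infinitely_often: "\<And>n. \<exists>j\<ge>n. 0 < g j"
begin

lemma le_first: "g n \<le> g 0"
  using lex_le_unfold[THEN iffD1, OF suffix_lex_le[of n]] by auto

lemma first_pos: "0 < g 0"
  using nonzero_infinitely_often[of 0] le_first by (meson less_le_trans)

lemma admissible_window: "y \<in> lex_shift g \<Longrightarrow> admissible g (window y k n)"
proof (induction n arbitrary: k)
  case (Suc n)
  then have "lex_le (right_ray y k) g" unfolding lex_shift_def by simp
  then have "word_lex_le (window y k (Suc n)) g" unfolding window_def by (rule word_lex_le_prefix)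
  then show ?case using Suc unfolding window_Suc by simp
qed (simp add: window_def)

text \<open>An admissible word, padded with zeros on both sides, is a point of the shift.\<close>
lemma language_lex_shift: "language (lex_shift g) = {u. admissible g u}"
proof (intro set_eqI iffI)
  fix u assume "u \<in> language (lex_shift g)"
  then show "u \<in> {u. admissible g u}" unfolding language_def using admissible_window by auto
next
  fix u assume u: "u \<in> {u. admissible g u}"
  define y where "y k = (if 0 \<le> k \<and> k < int (length u) then u ! nat k else 0)" for k
  have "lex_le (right_ray y k) g" for k
  proof (cases "k < 0")
    case True
    then have "right_ray y k 0 = 0" by (simp add: right_ray_def y_def)
    then show ?thesis using first_pos lex_le_unfold[of "right_ray y k" g] by simp
  next
    case False
    then obtain m where m: "k = int m" by (metis nonneg_int_cases not_less)
    have "right_ray y k = drop m u \<frown> (\<lambda>_. 0)"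
      unfolding m by (rule ext) (auto simp: right_ray_def y_def conc_def nat_int_add less_diff_conv add.commute)
    then show ?thesis using u unfolding admissible_def word_lex_le_def by simp
  qed
  then have "y \<in> lex_shift g" unfolding lex_shift_def by simp
  moreover have "window y 0 (length u) = u"
    unfolding window_def subsequence_def right_ray_def y_def by (rule nth_equalityI) auto
  ultimately show "u \<in> language (lex_shift g)" by (metis window_in_language)
qed

lemma word_follower_set_Cons_subset:
  "word_follower_set (lex_shift g) (c # w) \<subseteq> word_follower_set (lex_shift g) w"
  unfolding word_follower_set_def language_lex_shift by auto

definition bounded_words :: "nat \<Rightarrow> nat list set" where
  "bounded_words n = {u. admissible g u \<and> word_lex_le u (suffix n g)}"

lemma bounded_words_0: "bounded_words 0 = language (lex_shift g)"
  unfolding bounded_words_def language_lex_shift by (auto simp: admissible_word_lex_le)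

lemma bounded_words_subset: "bounded_words n \<subseteq> bounded_words 0"
  unfolding bounded_words_def by (auto simp: admissible_word_lex_le)

lemma singleton_in_bounded_words: "c \<le> g n \<Longrightarrow> [c] \<in> bounded_words n"
  unfolding bounded_words_def using le_first[of n] by auto

lemma Cons_bounded_words:
  "{u. c # u \<in> bounded_words n} =
     (if c = g n then bounded_words (Suc n) else if c < g n then bounded_words 0 else {})"
proof -
  have mem: "c # u \<in> bounded_words n \<longleftrightarrow>
      word_lex_le (c # u) g \<and> admissible g u \<and> (c < g n \<or> (c = g n \<and> word_lex_le u (suffix (Suc n) g)))"
    for u
    unfolding bounded_words_def by simp
  have first_letter: "word_lex_le (g n # u) g" if "word_lex_le u (suffix (Suc n) g)" for u
  proof -
    have "g n < g 0 \<or> (g n = g 0 \<and> lex_le (suffix (Suc n) g) (suffix 1 g))"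
      using lex_le_unfold[THEN iffD1, OF suffix_lex_le[of n]] by simp
    then show ?thesis using that word_lex_le_trans by auto
  qed
  show ?thesis
  proof (cases "c = g n")
    case True
    then show ?thesis
      using mem first_letter unfolding bounded_words_def by auto
  next
    case False
    moreover have "word_lex_le (c # u) g" if "c < g n" for u
      using that le_first[of n] by simp
    ultimately show ?thesis
      using mem unfolding bounded_words_def by (auto simp: admissible_word_lex_le)
  qed
qed

lemma word_follower_set_eq_bounded_words:
  "w \<in> language (lex_shift g) \<Longrightarrow> \<exists>n. word_follower_set (lex_shift g) w = bounded_words n"
proof (induction w rule: rev_induct)
  case Nil
  then show ?case by (auto simp: word_follower_set_def bounded_words_0 intro: exI[of _ 0])
next
  case (snoc c w)
  then have "w \<in> language (lex_shift g)" unfolding language_lex_shift by (auto dest: admissible_append)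
  then obtain n where n: "word_follower_set (lex_shift g) w = bounded_words n" using snoc.IH by blast
  have eq: "word_follower_set (lex_shift g) (w @ [c]) = {u. c # u \<in> bounded_words n}"
    unfolding n[symmetric] word_follower_set_def by simp
  have "[] \<in> word_follower_set (lex_shift g) (w @ [c])"
    using snoc.prems unfolding word_follower_set_def by simp
  then have "{u. c # u \<in> bounded_words n} \<noteq> {}" unfolding eq by blast
  then show ?case unfolding eq Cons_bounded_words by (auto split: if_splits)
qed

lemma prefix_in_bounded_words: "prefix k (suffix n g) \<in> bounded_words n"
proof -
  have "admissible g (prefix k (suffix n g))"
  proof (induction k arbitrary: n)
    case (Suc k)
    have eq: "prefix (Suc k) (suffix n g) = g n # prefix k (suffix (Suc n) g)"
      unfolding subsequence_def map_upt_Suc by (simp add: ac_simps)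
    have "word_lex_le (g n # prefix k (suffix (Suc n) g)) g"
      unfolding eq[symmetric] by (rule word_lex_le_prefix[OF suffix_lex_le])
    then show ?case unfolding eq admissible_Cons using Suc.IH[of "Suc n"] by blast
  qed simp
  then show ?thesis unfolding bounded_words_def mem_Collect_eq using word_lex_le_prefix[OF lex_le_refl] by blast
qed

lemma bounded_words_eq_iff: "bounded_words n = bounded_words m \<longleftrightarrow> suffix n g = suffix m g"
proof
  have le: "lex_le (suffix n g) (suffix m g)" if "bounded_words n \<subseteq> bounded_words m" for n m
    using that prefix_in_bounded_words unfolding bounded_words_def
    by (intro lex_le_if_word_lex_le_prefixes) blast
  show "bounded_words n = bounded_words m \<Longrightarrow> suffix n g = suffix m g"
    using le[of n m] le[of m n] by (auto intro: lex_le_antisym)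
qed (simp add: bounded_words_def)

lemma Cons_bounded_words_cycle:
  assumes "1 \<le> p" and "suffix (M + p) g = suffix M g"
  shows "{u. g (M + nat (t mod int p)) # u \<in> bounded_words (M + nat (t mod int p))} =
    bounded_words (M + nat ((t + 1) mod int p))"
proof -
  have "{u. g (M + nat (t mod int p)) # u \<in> bounded_words (M + nat (t mod int p))} =
      bounded_words (Suc (M + nat (t mod int p)))"
    using Cons_bounded_words by simp
  also have "\<dots> = bounded_words (M + nat ((t + 1) mod int p))"
  proof (cases "nat (t mod int p) + 1 < p")
    case False
    have "nat (t mod int p) < p" using assms(1) by (simp add: nat_less_iff)
    with False have wrap: "Suc (M + nat (t mod int p)) = M + p" "nat ((t + 1) mod int p) = 0"
      using nat_mod_int_succ[of p t] assms(1) by auto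
    show ?thesis unfolding wrap add_0_right bounded_words_eq_iff by (rule assms(2))
  qed (use nat_mod_int_succ[of p t] assms(1) in simp)
  finally show ?thesis .
qed

end

lemma finite_suffixes_if_eventually_periodic:
  assumes "eventually_periodic_seq g"
  shows "finite (range (\<lambda>n. suffix n g))"
proof -
  obtain p N where pN: "p \<ge> 1" "\<forall>i\<ge>N. g (i + p) = g i"
    using assms unfolding eventually_periodic_seq_def by blast
  have "suffix n g \<in> (\<lambda>n. suffix n g) ` {..<N + p}" for n
  proof (induction n rule: less_induct)
    case (less n)
    show ?case
    proof (cases "n < N + p")
      case False
      have "suffix n g = suffix (n - p) g"
      proof
        fix i
        have "g (n - p + i + p) = g (n - p + i)" by (rule pN(2)[rule_format]) (use False in linarith)
        moreover have "n - p + i + p = n + i" using False by simp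
        ultimately show "suffix n g i = suffix (n - p) g i" unfolding suffix_nth by metis
      qed
      moreover have "n - p < n" using pN False by simp
      ultimately show ?thesis using less.IH by simp
    qed simp
  qed
  then have "range (\<lambda>n. suffix n g) \<subseteq> (\<lambda>n. suffix n g) ` {..<N + p}" by blast
  then show ?thesis using finite_subset by blast
qed

lemma decreasing_chain_stabilizes:
  assumes "finite (range f)" and "\<And>k. f (Suc k) \<subseteq> f k"
  shows "\<exists>K. \<forall>k\<ge>K. f k = \<Inter>(range f)"
proof -
  have anti: "m \<le> n \<Longrightarrow> f n \<subseteq> f m" for m n
    using assms(2) by (rule lift_Suc_antimono_le)
  define index where "index A = (SOME i. f i = A)" for A
  define K where "K = Max (index ` range f)"
  have "f K \<subseteq> f k" for k
  proof -
    have "f (index (f k)) = f k" unfolding index_def by (rule someI) (rule refl)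
    moreover have "index (f k) \<le> K" unfolding K_def using assms(1) by simp
    ultimately show ?thesis using anti by blast
  qed
  then have "f k = \<Inter>(range f)" if "K \<le> k" for k
    using anti[OF that] by blast
  then show ?thesis by blast
qed

lemma finite_separating_prefix:
  assumes "finite S"
  shows "\<exists>K. \<forall>a\<in>S. \<forall>b\<in>S. (\<forall>i<K. (a :: nat \<Rightarrow> 'a) i = b i) \<longrightarrow> a = b"
proof -
  define P where "P = {(a, b). a \<in> S \<and> b \<in> S \<and> a \<noteq> b}"
  define d where "d ab = (SOME i. fst ab i \<noteq> snd ab i)" for ab :: "(nat \<Rightarrow> 'a) \<times> (nat \<Rightarrow> 'a)"
  have "P \<subseteq> S \<times> S" unfolding P_def by auto
  then have "finite P" using assms finite_subset by blast
  have d: "fst ab (d ab) \<noteq> snd ab (d ab)" if "ab \<in> P" for ab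
  proof -
    have "\<exists>i. fst ab i \<noteq> snd ab i" using that by (auto simp: P_def)
    then show ?thesis unfolding d_def by (rule someI_ex)
  qed
  define K where "K = Suc (Max (insert 0 (d ` P)))"
  have "a = b" if "a \<in> S" "b \<in> S" "\<forall>i<K. a i = b i" for a b
  proof (rule ccontr)
    assume "a \<noteq> b"
    then have "(a, b) \<in> P" using that by (simp add: P_def)
    moreover have "d (a, b) < K" unfolding K_def using \<open>finite P\<close> calculation by (simp add: le_imp_less_Suc)
    ultimately show False using d that(3) by fastforce
  qed
  then show ?thesis by blast
qed

lemma ex_le_mod_eq_0:
  fixes L T a :: int
  assumes "0 < L"
  shows "\<exists>t\<le>T. (t - a) mod L = 0"
proof
  define k where "k = \<bar>T\<bar> + \<bar>a\<bar> + 1"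
  have "1 * k \<le> L * k" using assms unfolding k_def by (intro mult_right_mono) simp_all
  then have "a - L * k \<le> T" using abs_ge_minus_self[of T] abs_ge_self[of a] k_def by linarith
  then show "a - L * k \<le> T \<and> (a - L * k - a) mod L = 0" by simp
qed

lemma infinite_congruent_pair:
  assumes "infinite (A :: nat set)" and "0 < p"
  obtains a b where "a \<in> A" "b \<in> A" "a < b" "a mod p = b mod p"
proof -
  have "\<not> inj_on (\<lambda>t. t mod p) A"
  proof
    assume "inj_on (\<lambda>t. t mod p) A"
    moreover have "(\<lambda>t. t mod p) ` A \<subseteq> {..<p}" using assms(2) by auto
    ultimately have "finite A" by (rule inj_on_finite) simp
    with assms(1) show False by simp
  qed
  then obtain a b where "a \<in> A" "b \<in> A" "a \<noteq> b" "a mod p = b mod p"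
    unfolding inj_on_def by blast
  then show ?thesis using that by (cases "a < b") (auto simp: not_less_iff_gr_or_eq)
qed

section \<open>The right Fischer cover of a shift bounded by a Parry sequence\<close>

locale lex_shift_fischer_cover = parry_sequence +
  fixes G :: lgraph
  assumes eventually_periodic: "eventually_periodic_seq g"
    and fischer_cover: "right_fischer_cover (lex_shift g) G"
begin

lemma finite_G: "finite_lgraph G"
  and presents_G: "cover_map G ` edge_shift G = lex_shift g"
  and right_resolving_G: "right_resolving G"
  and follower_separated_G: "follower_separated G"
  and minimal_G: "\<And>H. presents H (lex_shift g) \<Longrightarrow> right_resolving H \<Longrightarrow> card (verts G) \<le> card (verts H)"
  using fischer_cover unfolding right_fischer_cover_def presents_def by auto

lemma finite_verts: "finite (verts G)"
  using finite_G unfolding finite_lgraph_def by simp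

lemma edge_shift_step: "x \<in> edge_shift G \<Longrightarrow> x i \<in> edges G \<and> tgt G (x i) = src G (x (i + 1))"
  unfolding edge_shift_def by auto

lemma src_tgt_in_verts: "e \<in> edges G \<Longrightarrow> src G e \<in> verts G \<and> tgt G e \<in> verts G"
  using finite_G unfolding finite_lgraph_def by auto

lemma eq_if_follower_set_eq:
  "u \<in> verts G \<Longrightarrow> v \<in> verts G \<Longrightarrow> follower_set G u = follower_set G v \<Longrightarrow> u = v"
  using follower_separated_G unfolding follower_separated_def by auto

lemma eq_if_src_lab_eq:
  "e \<in> edges G \<Longrightarrow> e' \<in> edges G \<Longrightarrow> src G e = src G e' \<Longrightarrow> lab G e = lab G e' \<Longrightarrow> e = e'"
  using right_resolving_G unfolding right_resolving_def by auto

lemma eq_verts_if_restriction_presents: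
  assumes "V \<subseteq> verts G" and "lex_shift g \<subseteq> cover_map G ` edge_shift (restrict_verts G V)"
  shows "V = verts G"
proof -
  have "cover_map G ` edge_shift (restrict_verts G V) \<subseteq> lex_shift g"
    using presents_G edge_shift_restrict_verts by blast
  with assms(2) have "presents (restrict_verts G V) (lex_shift g)"
    unfolding presents_def using finite_lgraph_restrict_verts[OF finite_G assms(1)] by auto
  then have "card (verts G) \<le> card V"
    using minimal_G right_resolving_restrict_verts[OF right_resolving_G]
    by (fastforce simp: restrict_verts_def)
  then show ?thesis using assms(1) finite_verts by (meson card_seteq)
qed

lemma vertex_on_point: "v \<in> verts G \<Longrightarrow> \<exists>x\<in>edge_shift G. \<exists>i. src G (x i) = v"
proof -
  define V where "V = {v. \<exists>x\<in>edge_shift G. \<exists>i. src G (x i) = v}"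
  have "V \<subseteq> verts G" unfolding V_def using edge_shift_step src_tgt_in_verts by blast
  moreover have "x \<in> edge_shift (restrict_verts G V)" if "x \<in> edge_shift G" for x
    using that unfolding V_def edge_shift_restrict_verts by blast
  then have "lex_shift g \<subseteq> cover_map G ` edge_shift (restrict_verts G V)"
    using presents_G by blast
  ultimately have "V = verts G" by (rule eq_verts_if_restriction_presents)
  then show "v \<in> verts G \<Longrightarrow> \<exists>x\<in>edge_shift G. \<exists>i. src G (x i) = v" unfolding V_def by blast
qed

lemma verts_ne: "verts G \<noteq> {}"
proof -
  have "(\<lambda>_. 0) \<in> lex_shift g" unfolding lex_shift_def right_ray_def by (simp add: zero_lex_le)
  then obtain x where "x \<in> edge_shift G" using presents_G by blast
  then show ?thesis using edge_shift_step src_tgt_in_verts by blast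
qed

text \<open>A path is extended to a bi-infinite one by points of the edge shift through its end vertices.\<close>
lemma path_label_in_language:
  assumes v: "v \<in> verts G" and p: "is_path_from G v p"
  shows "map (lab G) p \<in> language (lex_shift g)"
proof -
  obtain x i where x: "x \<in> edge_shift G" "src G (x i) = v" using vertex_on_point[OF v] by blast
  define w where "w = path_end G v p"
  have "w \<in> verts G" unfolding w_def using path_end_in_verts[OF finite_G v p] .
  then obtain x' j where x': "x' \<in> edge_shift G" "src G (x' j) = w" using vertex_on_point by blast
  define L where "L = int (length p)"
  define z where "z t = (if t < 0 then x (i + t) else if t < L then p ! nat t else x' (j + t - L))" for t
  have "z t \<in> edges G \<and> tgt G (z t) = src G (z (t + 1))" for t
  proof -
    consider "t < -1" | "t = -1" | "0 \<le> t" "t + 1 < L" | "0 \<le> t" "t + 1 = L" | "L \<le> t" by linarith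
    then show ?thesis
    proof cases
      case 1 then show ?thesis using edge_shift_step[OF x(1), of "i + t"] unfolding z_def by (simp add: add.assoc)
    next
      case 2
      have "0 \<le> L" unfolding L_def by simp
      then have "z (t + 1) = (if 0 < L then p ! 0 else x' j)" using 2 unfolding z_def by auto
      then have "src G (z (t + 1)) = v"
        using path_nth[OF p, of 0] x'(2) unfolding w_def L_def by (cases p) auto
      then show ?thesis using edge_shift_step[OF x(1), of "i - 1"] x(2) 2 unfolding z_def by simp
    next
      case 3
      then have "nat t < length p" "Suc (nat t) < length p" unfolding L_def by auto
      then show ?thesis using path_nth[OF p, of "nat t"] path_nth[OF p, of "Suc (nat t)"] 3
        unfolding z_def by (simp add: nat_add_distrib)
    next
      case 4
      then have "nat t < length p" "Suc (nat t) = length p" unfolding L_def by auto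
      then have "tgt G (z t) = w" "z t \<in> edges G"
        using path_nth[OF p, of "nat t"] 4 unfolding z_def w_def by auto
      moreover have "z (t + 1) = x' j" using 4 unfolding z_def by simp
      ultimately show ?thesis using x'(2) by simp
    next
      case 5
      then show ?thesis using edge_shift_step[OF x'(1), of "j + t - L"] unfolding z_def L_def by (simp add: algebra_simps)
    qed
  qed
  then have "z \<in> edge_shift G" unfolding edge_shift_def by simp
  then have "cover_map G z \<in> lex_shift g" using presents_G by blast
  moreover have "window (cover_map G z) 0 (length p) = map (lab G) p"
    unfolding window_def subsequence_def right_ray_def cover_map_def z_def L_def
    by (rule nth_equalityI) auto
  ultimately show ?thesis by (metis window_in_language)
qed

lemma language_word_path:
  assumes "u \<in> language (lex_shift g)"
  obtains v p where "v \<in> verts G" "is_path_from G v p" "map (lab G) p = u"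
proof -
  obtain y k n where y: "y \<in> lex_shift g" "u = window y k n" using assms unfolding language_def by blast
  obtain x where x: "x \<in> edge_shift G" "y = cover_map G x" using y(1) presents_G by blast
  show ?thesis
  proof
    show "src G (x k) \<in> verts G" using edge_shift_step[OF x(1)] src_tgt_in_verts by blast
    show "is_path_from G (src G (x k)) (window x k n)" using edge_shift_window_path[OF x(1)] by blast
    show "map (lab G) (window x k n) = u" using y x map_lab_window by metis
  qed
qed

lemma follower_set_terminal_vertex:
  assumes "terminal_verts G w = {v}"
  shows "follower_set G v = word_follower_set (lex_shift g) w"
proof (intro set_eqI iffI)
  fix u assume "u \<in> follower_set G v"
  then obtain q where q: "is_path_from G v q" "u = map (lab G) q" unfolding mem_follower_set_iff by metis
  have "v \<in> terminal_verts G w" using assms by simp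
  then obtain t p where tp: "v = path_end G t p" "t \<in> verts G" "is_path_from G t p" "map (lab G) p = w"
    unfolding terminal_verts_def by blast
  have "is_path_from G t (p @ q)" using tp q is_path_from_append by auto
  then have "map (lab G) (p @ q) \<in> language (lex_shift g)" using path_label_in_language tp(2) by blast
  then show "u \<in> word_follower_set (lex_shift g) w" unfolding word_follower_set_def using tp q by simp
next
  fix u assume "u \<in> word_follower_set (lex_shift g) w"
  then have "w @ u \<in> language (lex_shift g)" unfolding word_follower_set_def by simp
  then obtain t r where r: "t \<in> verts G" "is_path_from G t r" "map (lab G) r = w @ u"
    by (rule language_word_path)
  obtain p1 p2 where p: "r = p1 @ p2" "map (lab G) p1 = w" "map (lab G) p2 = u"
    "is_path_from G t p1" "is_path_from G (path_end G t p1) p2"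
    by (rule path_split_labels[OF r(2,3)])
  have "path_end G t p1 \<in> terminal_verts G w"
    using path_end_in_terminal_verts[OF r(1) p(4)] p(2) by simp
  then have "path_end G t p1 = v" using assms by simp
  then show "u \<in> follower_set G v" using path_labels_in_follower_set[OF p(5)] p(3) by simp
qed

lemma synchronized_vertex:
  obtains v w where "v \<in> verts G" "w \<in> language (lex_shift g)"
    "follower_set G v = word_follower_set (lex_shift g) w"
proof -
  obtain w v where wv: "terminal_verts G w = {v}"
    using synchronizing_word[OF finite_G right_resolving_G follower_separated_G verts_ne] by blast
  then have "v \<in> verts G" using terminal_verts_subset[OF finite_G] by blast
  moreover have F: "follower_set G v = word_follower_set (lex_shift g) w"
    by (rule follower_set_terminal_vertex[OF wv])
  moreover have "w \<in> language (lex_shift g)"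
    using Nil_in_follower_set[of G v] unfolding F word_follower_set_def by simp
  ultimately show ?thesis using that by blast
qed

lemma finite_range_bounded_words: "finite (range bounded_words)"
proof -
  have "range bounded_words \<subseteq> (\<lambda>s. {u. admissible g u \<and> word_lex_le u s}) ` range (\<lambda>n. suffix n g)"
    unfolding bounded_words_def by blast
  then show ?thesis
    using finite_suffixes_if_eventually_periodic[OF eventually_periodic] finite_subset by blast
qed

text \<open>The follower set determined by the whole past of a point at time t; it is the follower set
  of the vertex at time t of any lift of the point.\<close>
definition past_follower_set :: "(int \<Rightarrow> nat) \<Rightarrow> int \<Rightarrow> nat list set" where
  "past_follower_set y t = (\<Inter>k. word_follower_set (lex_shift g) (window y (t - int k) k))"

lemma past_follower_set_stable:
  assumes "y \<in> lex_shift g"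
  shows "\<exists>K. \<forall>k\<ge>K. word_follower_set (lex_shift g) (window y (t - int k) k) = past_follower_set y t"
proof -
  have "word_follower_set (lex_shift g) (window y (t - int k) k) \<in> range bounded_words" for k
    using word_follower_set_eq_bounded_words[OF window_in_language[OF assms]] by (metis rangeI)
  then have "range (\<lambda>k. word_follower_set (lex_shift g) (window y (t - int k) k)) \<subseteq> range bounded_words"
    by blast
  then have "finite (range (\<lambda>k. word_follower_set (lex_shift g) (window y (t - int k) k)))"
    using finite_range_bounded_words finite_subset by blast
  moreover have "window y (t - int (Suc k)) (Suc k) = y (t - int (Suc k)) # window y (t - int k) k" for k
    unfolding window_Suc by (simp add: algebra_simps)
  then have "word_follower_set (lex_shift g) (window y (t - int (Suc k)) (Suc k))
      \<subseteq> word_follower_set (lex_shift g) (window y (t - int k) k)" for k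
    using word_follower_set_Cons_subset by metis
  ultimately show ?thesis unfolding past_follower_set_def by (rule decreasing_chain_stabilizes)
qed

lemma past_follower_set_eq_bounded_words:
  assumes "y \<in> lex_shift g"
  shows "\<exists>n. past_follower_set y t = bounded_words n"
proof -
  obtain K where "word_follower_set (lex_shift g) (window y (t - int K) K) = past_follower_set y t"
    using past_follower_set_stable[OF assms] by blast
  then show ?thesis using word_follower_set_eq_bounded_words window_in_language[OF assms] by metis
qed

lemma past_follower_set_succ:
  assumes "y \<in> lex_shift g"
  shows "past_follower_set y (t + 1) = {u. y t # u \<in> past_follower_set y t}"
proof -
  obtain K1 where K1: "\<forall>k\<ge>K1. word_follower_set (lex_shift g) (window y (t - int k) k) = past_follower_set y t"
    using past_follower_set_stable[OF assms] by blast
  obtain K2 where K2: "\<forall>k\<ge>K2. word_follower_set (lex_shift g) (window y (t + 1 - int k) k) = past_follower_set y (t + 1)"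
    using past_follower_set_stable[OF assms] by blast
  define k where "k = max K1 K2"
  have "window y (t + 1 - int (Suc k)) (Suc k) = window y (t - int k) k @ [y t]"
    unfolding window_Suc_right by simp
  then have "past_follower_set y (t + 1) = {u. y t # u \<in> word_follower_set (lex_shift g) (window y (t - int k) k)}"
    using K2[rule_format, of "Suc k"] unfolding k_def word_follower_set_def by simp
  also have "\<dots> = {u. y t # u \<in> past_follower_set y t}" using K1 unfolding k_def by simp
  finally show ?thesis .
qed

lemma singleton_in_past_follower_set:
  assumes "y \<in> lex_shift g"
  shows "[y t] \<in> past_follower_set y t"
proof -
  obtain K where K: "\<forall>k\<ge>K. word_follower_set (lex_shift g) (window y (t - int k) k) = past_follower_set y t"
    using past_follower_set_stable[OF assms] by blast
  have "window y (t - int K) (Suc K) = window y (t - int K) K @ [y t]"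
    unfolding window_Suc_right by simp
  then have "window y (t - int K) K @ [y t] \<in> language (lex_shift g)"
    using window_in_language[OF assms, of "t - int K" "Suc K"] by simp
  then have "[y t] \<in> word_follower_set (lex_shift g) (window y (t - int K) K)"
    unfolding word_follower_set_def by simp
  then show ?thesis using K by simp
qed

lemma edge_transition:
  assumes "e \<in> edges G" and "follower_set G (src G e) = bounded_words n"
  shows "(lab G e = g n \<and> follower_set G (tgt G e) = bounded_words (Suc n)) \<or>
         (lab G e < g n \<and> follower_set G (tgt G e) = bounded_words 0)"
proof -
  have F: "follower_set G (tgt G e) = {u. lab G e # u \<in> bounded_words n}"
    using follower_set_tgt[OF right_resolving_G assms(1)] assms(2) by simp
  have "{u. lab G e # u \<in> bounded_words n} \<noteq> {}"
    using Nil_in_follower_set[of G "tgt G e"] unfolding F by blast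
  then show ?thesis using F unfolding Cons_bounded_words by (auto split: if_splits)
qed

lemma edge_with_label:
  assumes "follower_set G v = bounded_words n" and "c \<le> g n"
  shows "\<exists>e\<in>edges G. src G e = v \<and> lab G e = c"
  using singleton_in_bounded_words[OF assms(2)] assms(1) singleton_in_follower_set_iff by metis

lemma follower_set_reach:
  assumes "follower_set G v0 = word_follower_set (lex_shift g) w0" and "v \<in> reach G v0"
  shows "\<exists>n. follower_set G v = bounded_words n"
proof -
  obtain q where q: "v = path_end G v0 q" "is_path_from G v0 q" using assms(2) unfolding reach_def by blast
  have F: "follower_set G v = word_follower_set (lex_shift g) (w0 @ map (lab G) q)"
    using follower_set_path_end[OF right_resolving_G q(2)] q(1) assms(1)
    unfolding word_follower_set_def by simp
  then have "w0 @ map (lab G) q \<in> language (lex_shift g)"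
    using Nil_in_follower_set[of G v] unfolding word_follower_set_def by simp
  then show ?thesis using F word_follower_set_eq_bounded_words by metis
qed

text \<open>From a vertex with follower set bounded by the n-th suffix of g the edge labelled g n leads to
  the (n+1)-st, and since g has infinitely many nonzero letters an edge labelled 0 eventually
  leads to the root, from which all of them are reached again.\<close>
lemma bounded_words_in_reach:
  assumes "follower_set G v0 = word_follower_set (lex_shift g) w0"
  shows "\<exists>v\<in>reach G v0. follower_set G v = bounded_words n"
proof -
  have step: "\<exists>v'\<in>reach G v0. follower_set G v' = bounded_words (Suc n)"
    if v: "v \<in> reach G v0" and Fv: "follower_set G v = bounded_words n" for v n
  proof -
    obtain e where e: "e \<in> edges G" "src G e = v" "lab G e = g n"
      using edge_with_label[OF Fv order_refl] by blast
    then have "follower_set G (tgt G e) = bounded_words (Suc n)"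
      using edge_transition[of e n] Fv by auto
    then show ?thesis using tgt_in_reach[OF v e(1,2)] by blast
  qed
  have reach_from: "\<exists>v\<in>reach G v0. follower_set G v = bounded_words (m + i)"
    if "\<exists>v\<in>reach G v0. follower_set G v = bounded_words m" for m i
    using that by (induction i) (use step in auto)
  obtain m where "follower_set G v0 = bounded_words m"
    using follower_set_reach[OF assms start_in_reach] by blast
  then have v0: "\<exists>v\<in>reach G v0. follower_set G v = bounded_words m" using start_in_reach by blast
  obtain j where j: "m \<le> j" "0 < g j" using nonzero_infinitely_often by blast
  obtain v where v: "v \<in> reach G v0" "follower_set G v = bounded_words j"
    using reach_from[OF v0, of "j - m"] j(1) by auto
  obtain e where e: "e \<in> edges G" "src G e = v" "lab G e = 0"
    using edge_with_label[OF v(2)] by blast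
  then have "follower_set G (tgt G e) = bounded_words 0"
    using edge_transition[of e j] v(2) j(2) by auto
  then have "\<exists>v\<in>reach G v0. follower_set G v = bounded_words 0"
    using tgt_in_reach[OF v(1) e(1,2)] by blast
  from reach_from[OF this, of n] show ?thesis by simp
qed

text \<open>A lift of a point reads off, at each time, a vertex whose follower set is the past follower
  set of the point.\<close>
lemma lex_shift_covered:
  assumes "V \<subseteq> verts G" and "\<And>n. \<exists>v\<in>V. follower_set G v = bounded_words n"
  shows "lex_shift g \<subseteq> cover_map G ` edge_shift (restrict_verts G V)"
proof
  fix y assume y: "y \<in> lex_shift g"
  define vert where "vert t = (SOME v. v \<in> V \<and> follower_set G v = past_follower_set y t)" for t
  have vert: "vert t \<in> V \<and> follower_set G (vert t) = past_follower_set y t" for t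
  proof -
    obtain n where "past_follower_set y t = bounded_words n"
      using past_follower_set_eq_bounded_words[OF y] by blast
    then have "\<exists>v. v \<in> V \<and> follower_set G v = past_follower_set y t" using assms(2) by metis
    then show ?thesis unfolding vert_def by (rule someI_ex)
  qed
  then obtain x where x: "x \<in> edge_shift G" "cover_map G x = y" "\<forall>t. src G (x t) = vert t"
    using lift_from_vertex_sequence[OF finite_G right_resolving_G follower_separated_G, of vert y]
      assms(1) singleton_in_past_follower_set[OF y] past_follower_set_succ[OF y] by auto
  then have "x \<in> edge_shift (restrict_verts G V)" unfolding edge_shift_restrict_verts using vert by simp
  then show "y \<in> cover_map G ` edge_shift (restrict_verts G V)" by (rule rev_image_eqI) (simp add: x(2))
qed

lemma follower_set_vertex:
  "v \<in> verts G \<Longrightarrow> \<exists>n. follower_set G v = bounded_words n"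
  and vertex_with_follower_set: "\<exists>v\<in>verts G. follower_set G v = bounded_words n"
proof -
  obtain v0 w0 where v0: "v0 \<in> verts G" "follower_set G v0 = word_follower_set (lex_shift g) w0"
    using synchronized_vertex by metis
  have "reach G v0 \<subseteq> verts G" by (rule reach_subset[OF finite_G v0(1)])
  moreover have "lex_shift g \<subseteq> cover_map G ` edge_shift (restrict_verts G (reach G v0))"
    using lex_shift_covered[OF calculation bounded_words_in_reach[OF v0(2)]] .
  ultimately have "reach G v0 = verts G" by (rule eq_verts_if_restriction_presents)
  then show "v \<in> verts G \<Longrightarrow> \<exists>n. follower_set G v = bounded_words n"
    and "\<exists>v\<in>verts G. follower_set G v = bounded_words n"
    using follower_set_reach[OF v0(2)] bounded_words_in_reach[OF v0(2)] by auto
qed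

lemma suffix_separating_length: "\<exists>K. \<forall>n m. (\<forall>i<K. g (n + i) = g (m + i)) \<longrightarrow> suffix n g = suffix m g"
  using finite_separating_prefix[OF finite_suffixes_if_eventually_periodic[OF eventually_periodic]]
  by (metis rangeI suffix_nth)

definition lifts :: "(int \<Rightarrow> nat) \<Rightarrow> (int \<Rightarrow> nat) set" where
  "lifts y = {x \<in> edge_shift G. cover_map G x = y}"

definition follower_set_at :: "(int \<Rightarrow> nat) \<Rightarrow> int \<Rightarrow> nat list set" where
  "follower_set_at x t = follower_set G (src G (x t))"

text \<open>The root is the vertex whose followers are all admissible words.\<close>
definition visits_root_in_past :: "(int \<Rightarrow> nat) \<Rightarrow> bool" where
  "visits_root_in_past x \<longleftrightarrow> (\<forall>T. \<exists>t\<le>T. follower_set_at x t = bounded_words 0)"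

lemma lift_edge:
  assumes "x \<in> lifts y"
  shows "x t \<in> edges G \<and> lab G (x t) = y t \<and> tgt G (x t) = src G (x (t + 1)) \<and> src G (x t) \<in> verts G"
  using assms edge_shift_step[of x t] src_tgt_in_verts[of "x t"]
  unfolding lifts_def cover_map_def by auto

lemma follower_set_at_succ:
  "x \<in> lifts y \<Longrightarrow> follower_set_at x (t + 1) = {u. y t # u \<in> follower_set_at x t}"
  using follower_set_tgt[OF right_resolving_G, of "x t"] lift_edge[of x y t]
  unfolding follower_set_at_def by simp

lemma follower_set_at_mono:
  assumes "x \<in> lifts y" "x' \<in> lifts y" "follower_set_at x' s \<subseteq> follower_set_at x s" "s \<le> t"
  shows "follower_set_at x' t \<subseteq> follower_set_at x t"
  using assms(4)
proof (induction t rule: int_ge_induct)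
  case (step i)
  then show ?case unfolding follower_set_at_succ[OF assms(1)] follower_set_at_succ[OF assms(2)] by auto
qed (rule assms(3))

lemma lifts_eq_if_follower_set_at_eq:
  assumes "x \<in> lifts y" "x' \<in> lifts y" "\<And>t. follower_set_at x t = follower_set_at x' t"
  shows "x = x'"
proof
  fix t
  have "src G (x t) = src G (x' t)"
    using assms(3)[of t] eq_if_follower_set_eq lift_edge[OF assms(1)] lift_edge[OF assms(2)]
    unfolding follower_set_at_def by blast
  then show "x t = x' t"
    using eq_if_src_lab_eq lift_edge[OF assms(1), of t] lift_edge[OF assms(2), of t] by simp
qed

lemma follower_set_at_bounded: "x \<in> lifts y \<Longrightarrow> \<exists>n. follower_set_at x t = bounded_words n"
  using follower_set_vertex lift_edge unfolding follower_set_at_def by blast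

lemma follower_set_at_subset: "x \<in> lifts y \<Longrightarrow> follower_set_at x t \<subseteq> bounded_words 0"
  using follower_set_at_bounded bounded_words_subset by blast

text \<open>After a common visit to the root, two lifts have the same follower sets from then on.\<close>
lemma lift_unique_if_visits_root:
  assumes "x \<in> lifts y" "x' \<in> lifts y" "visits_root_in_past x" "visits_root_in_past x'"
  shows "x = x'"
proof (rule lifts_eq_if_follower_set_at_eq[OF assms(1,2)])
  fix t
  obtain s where s: "s \<le> t" "follower_set_at x s = bounded_words 0"
    using assms(3) unfolding visits_root_in_past_def by blast
  obtain s' where s': "s' \<le> t" "follower_set_at x' s' = bounded_words 0"
    using assms(4) unfolding visits_root_in_past_def by blast
  have "follower_set_at x' t \<subseteq> follower_set_at x t"
    using follower_set_at_mono[OF assms(1,2) _ s(1)] follower_set_at_subset[OF assms(2)] s(2) by simp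
  moreover have "follower_set_at x t \<subseteq> follower_set_at x' t"
    using follower_set_at_mono[OF assms(2,1) _ s'(1)] follower_set_at_subset[OF assms(1)] s'(2) by simp
  ultimately show "follower_set_at x t = follower_set_at x' t" by blast
qed

lemma follower_set_at_step:
  assumes "x \<in> lifts y" "follower_set_at x t = bounded_words n" "follower_set_at x (t + 1) \<noteq> bounded_words 0"
  shows "y t = g n \<and> follower_set_at x (t + 1) = bounded_words (Suc n)"
  using edge_transition[of "x t" n] lift_edge[OF assms(1), of t] assms(2,3)
  unfolding follower_set_at_def by auto

lemma follower_set_at_reads_g:
  assumes "x \<in> lifts y" "follower_set_at x s = bounded_words n"
    and "\<And>i. 1 \<le> i \<Longrightarrow> i \<le> k \<Longrightarrow> follower_set_at x (s + int i) \<noteq> bounded_words 0"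
  shows "follower_set_at x (s + int k) = bounded_words (n + k) \<and> (\<forall>i<k. y (s + int i) = g (n + i))"
  using assms(3)
proof (induction k)
  case (Suc k)
  then have IH: "follower_set_at x (s + int k) = bounded_words (n + k)" "\<forall>i<k. y (s + int i) = g (n + i)"
    by auto
  have "follower_set_at x (s + int k + 1) \<noteq> bounded_words 0"
    using Suc.prems[of "Suc k"] by (simp add: ac_simps)
  then have "y (s + int k) = g (n + k) \<and> follower_set_at x (s + int k + 1) = bounded_words (Suc (n + k))"
    using follower_set_at_step[OF assms(1) IH(1)] by blast
  then show ?case using IH(2) by (auto simp: less_Suc_eq ac_simps)
qed (use assms(2) in simp)

text \<open>Two lifts that avoid the root far enough in the past both read g there; by the choice of K, K
  letters of g determine the suffix of g read so far, hence the follower sets agree.\<close>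
lemma lift_unique_if_avoids_root:
  assumes "x \<in> lifts y" "x' \<in> lifts y" "\<not> visits_root_in_past x" "\<not> visits_root_in_past x'"
  shows "x = x'"
proof -
  obtain T1 where T1: "\<forall>t\<le>T1. follower_set_at x t \<noteq> bounded_words 0"
    using assms(3) unfolding visits_root_in_past_def by blast
  obtain T2 where T2: "\<forall>t\<le>T2. follower_set_at x' t \<noteq> bounded_words 0"
    using assms(4) unfolding visits_root_in_past_def by blast
  define T where "T = min T1 T2"
  obtain K where K: "\<forall>n m. (\<forall>i<K. g (n + i) = g (m + i)) \<longrightarrow> suffix n g = suffix m g"
    using suffix_separating_length by blast
  have past: "follower_set_at x t = follower_set_at x' t" if "t \<le> T" for t
  proof -
    define s where "s = t - int K"
    have avoid: "follower_set_at x (s + int i) \<noteq> bounded_words 0 \<and> follower_set_at x' (s + int i) \<noteq> bounded_words 0"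
      if "i \<le> K" for i
    proof -
      have "s + int i \<le> T1" "s + int i \<le> T2" using that \<open>t \<le> T\<close> unfolding s_def T_def by linarith+
      then show ?thesis using T1 T2 by blast
    qed
    obtain n where n: "follower_set_at x s = bounded_words n" using follower_set_at_bounded[OF assms(1)] by blast
    obtain n' where n': "follower_set_at x' s = bounded_words n'" using follower_set_at_bounded[OF assms(2)] by blast
    have c: "follower_set_at x (s + int K) = bounded_words (n + K) \<and> (\<forall>i<K. y (s + int i) = g (n + i))"
      by (rule follower_set_at_reads_g[OF assms(1) n]) (use avoid in blast)
    have c': "follower_set_at x' (s + int K) = bounded_words (n' + K) \<and> (\<forall>i<K. y (s + int i) = g (n' + i))"
      by (rule follower_set_at_reads_g[OF assms(2) n']) (use avoid in blast)
    have "suffix n g = suffix n' g" using K c c' by auto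
    then have "suffix (n + K) g = suffix (n' + K) g" by (metis suffix_suffix)
    then have "bounded_words (n + K) = bounded_words (n' + K)" by (simp add: bounded_words_eq_iff)
    then show ?thesis using c c' unfolding s_def by simp
  qed
  show ?thesis
  proof (rule lifts_eq_if_follower_set_at_eq[OF assms(1,2)])
    fix t
    show "follower_set_at x t = follower_set_at x' t"
    proof (cases "t \<le> T")
      case False
      then have "T \<le> t" by simp
      then show ?thesis
        using follower_set_at_mono[OF assms(1,2) _ \<open>T \<le> t\<close>] follower_set_at_mono[OF assms(2,1) _ \<open>T \<le> t\<close>]
          past[of T] by blast
    qed (rule past)
  qed
qed

lemma finite_lifts: "finite (lifts y)" and card_lifts_le_2: "card (lifts y) \<le> 2"
proof -
  have inj: "inj_on visits_root_in_past (lifts y)"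
  proof (rule inj_onI)
    fix x x' assume x: "x \<in> lifts y" "x' \<in> lifts y" "visits_root_in_past x = visits_root_in_past x'"
    show "x = x'"
    proof (cases "visits_root_in_past x")
      case True
      then show ?thesis using lift_unique_if_visits_root[OF x(1,2)] x(3) by simp
    next
      case False
      then show ?thesis using lift_unique_if_avoids_root[OF x(1,2)] x(3) by simp
    qed
  qed
  show "finite (lifts y)" by (rule inj_on_finite[OF inj subset_UNIV]) simp
  have "card (lifts y) \<le> card (UNIV :: bool set)" by (rule card_inj_on_le[OF inj subset_UNIV]) simp
  then show "card (lifts y) \<le> 2" by simp
qed

text \<open>With period p, reading g for the p - n mod p steps that bring the index to a multiple of p
  returns to the root.\<close>
lemma visits_root_if_periodic:
  assumes "periodic_seq g" "x \<in> lifts y"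
  shows "visits_root_in_past x"
proof (rule ccontr)
  assume "\<not> visits_root_in_past x"
  then obtain T where T: "\<forall>t\<le>T. follower_set_at x t \<noteq> bounded_words 0"
    unfolding visits_root_in_past_def by blast
  obtain p where p: "p \<ge> 1" "\<forall>i. g (i + p) = g i" using assms(1) unfolding periodic_seq_def by blast
  have period: "suffix (m * p) g = g" for m
  proof (induction m)
    case (Suc m)
    show ?case
    proof
      fix i
      have "g (m * p + i + p) = g (m * p + i)" using p(2) by blast
      also have "\<dots> = g i" using fun_cong[OF Suc.IH, of i] by simp
      finally show "suffix (Suc m * p) g i = g i" by (simp add: ac_simps)
    qed
  qed simp
  define s where "s = T - int p"
  obtain n where n: "follower_set_at x s = bounded_words n" using follower_set_at_bounded[OF assms(2)] by blast
  define i where "i = p - n mod p"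
  have i: "1 \<le> i" "i \<le> p" unfolding i_def using p(1) by (simp_all add: Suc_leI)
  have "n mod p < p" using p(1) by simp
  moreover have "n = n div p * p + n mod p" by simp
  ultimately have "n + i = n div p * p + p" unfolding i_def by linarith
  then have "n + i = (n div p + 1) * p" by simp
  then have "bounded_words (n + i) = bounded_words 0" by (simp only: bounded_words_eq_iff period suffix_0)
  moreover have "follower_set_at x (s + int i) = bounded_words (n + i)"
    using follower_set_at_reads_g[OF assms(2) n, of i] T i unfolding s_def by auto
  ultimately show False using T i unfolding s_def by auto
qed

lemma one_to_one_if_periodic:
  assumes "periodic_seq g"
  shows "one_to_one G"
  unfolding one_to_one_def
proof (rule inj_onI)
  fix x x' assume "x \<in> edge_shift G" "x' \<in> edge_shift G" "cover_map G x = cover_map G x'"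
  then have "x \<in> lifts (cover_map G x)" "x' \<in> lifts (cover_map G x)" unfolding lifts_def by auto
  then show "x = x'" using lift_unique_if_visits_root visits_root_if_periodic[OF assms] by blast
qed

lemma bounded_words_ne_root:
  assumes "\<not> periodic_seq g" and "1 \<le> n"
  shows "bounded_words n \<noteq> bounded_words 0"
proof
  assume "bounded_words n = bounded_words 0"
  then have "suffix n g = g" by (simp add: bounded_words_eq_iff)
  then have "\<forall>i. g (i + n) = g i" by (metis add.commute suffix_nth)
  then show False using assms unfolding periodic_seq_def by blast
qed

text \<open>The point repeating the periodic part of g forever has a lift running around the cycle of
  vertices whose follower sets are bounded by the corresponding suffixes of g, none of which is the
  root when g is not periodic.\<close>
lemma lift_avoiding_root:
  assumes "\<not> periodic_seq g"
  obtains p y x where "1 \<le> p" "\<And>t j. y (t + int p * j) = y t" "x \<in> lifts y" "\<not> visits_root_in_past x"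
proof -
  obtain p N where p: "p \<ge> 1" "\<forall>i\<ge>N. g (i + p) = g i"
    using eventually_periodic unfolding eventually_periodic_seq_def by blast
  define M where "M = Suc N"
  have tail: "suffix (M + p) g = suffix M g"
  proof
    fix i
    have "g (M + i + p) = g (M + i)" by (rule p(2)[rule_format]) (simp add: M_def)
    then show "suffix (M + p) g i = suffix M g i" by (simp add: ac_simps)
  qed
  define vert where "vert n = (SOME v. v \<in> verts G \<and> follower_set G v = bounded_words n)" for n
  have vert: "vert n \<in> verts G \<and> follower_set G (vert n) = bounded_words n" for n
    unfolding vert_def by (rule someI_ex) (use vertex_with_follower_set in blast)
  define phase where "phase t = M + nat (t mod int p)" for t
  define y where "y t = g (phase t)" for t
  have "follower_set G (vert (phase (t + 1))) = {u. y t # u \<in> follower_set G (vert (phase t))}" for t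
    using vert Cons_bounded_words_cycle[OF p(1) tail, of t] unfolding y_def phase_def by simp
  moreover have "[y t] \<in> follower_set G (vert (phase t))" for t
    using vert singleton_in_bounded_words[of "y t"] unfolding y_def by simp
  ultimately obtain x where x: "x \<in> edge_shift G" "cover_map G x = y" "\<forall>t. src G (x t) = vert (phase t)"
    using lift_from_vertex_sequence[OF finite_G right_resolving_G follower_separated_G, of "\<lambda>t. vert (phase t)" y]
      vert by blast
  show ?thesis
  proof
    show "1 \<le> p" by (rule p(1))
    show "y (t + int p * j) = y t" for t j unfolding y_def phase_def by simp
    show "x \<in> lifts y" unfolding lifts_def using x by simp
    have "follower_set_at x t \<noteq> bounded_words 0" for t
      using x(3) vert bounded_words_ne_root[OF assms, of "phase t"] unfolding follower_set_at_def phase_def M_def by simp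
    then show "\<not> visits_root_in_past x" unfolding visits_root_in_past_def by blast
  qed
qed

lemma forward_path_from_root:
  assumes "y \<in> lex_shift g"
  shows "\<exists>ed. \<forall>n. (ed n \<in> edges G \<and> lab G (ed n) = y (int n) \<and> tgt G (ed n) = src G (ed (Suc n))) \<and>
    follower_set G (src G (ed n)) = word_follower_set (lex_shift g) (window y 0 n)"
proof -
  obtain v0 where v0: "v0 \<in> verts G" "follower_set G v0 = bounded_words 0"
    using vertex_with_follower_set by blast
  have prefixes: "prefix n (right_ray y 0) \<in> follower_set G v0" for n
    using window_in_language[OF assms] unfolding v0(2) bounded_words_0 window_def by blast
  obtain ed where ed: "src G (ed 0) = v0"
    "\<And>n. ed n \<in> edges G \<and> lab G (ed n) = right_ray y 0 n \<and> tgt G (ed n) = src G (ed (Suc n))"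
    using one_sided_path[OF right_resolving_G prefixes] by blast
  have "follower_set G (src G (ed n)) = word_follower_set (lex_shift g) (window y 0 n)" for n
  proof (induction n)
    case 0
    then show ?case using ed(1) v0(2) by (simp add: bounded_words_0 word_follower_set_def window_def)
  next
    case (Suc n)
    have "follower_set G (src G (ed (Suc n))) = {u. y (int n) # u \<in> follower_set G (src G (ed n))}"
      using follower_set_tgt[OF right_resolving_G, of "ed n"] ed(2)[of n] by (simp add: right_ray_def)
    then show ?case using Suc.IH by (simp add: word_follower_set_def window_Suc_right)
  qed
  with ed(2) show ?thesis by (intro exI[of _ ed]) (simp add: right_ray_def)
qed

text \<open>Otherwise the path would read g from its last visit to the root on, and g would inherit the
  period of y.\<close>
lemma root_visited_infinitely_often:
  assumes "\<not> periodic_seq g" and "1 \<le> p" and yper: "\<And>t j. y (t + int p * j) = y t"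
    and ed: "\<And>n. ed n \<in> edges G \<and> lab G (ed n) = y (int n) \<and> tgt G (ed n) = src G (ed (Suc n))"
    and root: "follower_set G (src G (ed 0)) = bounded_words 0"
  shows "\<exists>t\<ge>t0. follower_set G (src G (ed t)) = bounded_words 0"
proof (rule ccontr)
  assume no_return: "\<not> (\<exists>t\<ge>t0. follower_set G (src G (ed t)) = bounded_words 0)"
  define S where "S = {t. t \<le> t0 \<and> follower_set G (src G (ed t)) = bounded_words 0}"
  have "finite S" "0 \<in> S" unfolding S_def using root by simp_all
  define \<tau> where "\<tau> = Max S"
  have \<tau>: "follower_set G (src G (ed \<tau>)) = bounded_words 0"
    using Max_in[OF \<open>finite S\<close>] \<open>0 \<in> S\<close> unfolding \<tau>_def S_def by blast
  have later: "follower_set G (src G (ed t)) \<noteq> bounded_words 0" if "\<tau> < t" for t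
  proof
    assume root_t: "follower_set G (src G (ed t)) = bounded_words 0"
    show False
    proof (cases "t \<le> t0")
      case True
      then have "t \<le> \<tau>" using root_t Max_ge[OF \<open>finite S\<close>, of t] unfolding \<tau>_def S_def by blast
      with that show False by simp
    qed (use no_return root_t in auto)
  qed
  have reads: "follower_set G (src G (ed (\<tau> + i))) = bounded_words i \<and> y (int (\<tau> + i)) = g i" for i
  proof (induction i)
    case 0
    have "follower_set G (tgt G (ed \<tau>)) \<noteq> bounded_words 0" using later[of "Suc \<tau>"] ed by simp
    then show ?case using \<tau> edge_transition[of "ed \<tau>" 0] ed by auto
  next
    case (Suc i)
    have "follower_set G (src G (ed (\<tau> + Suc i))) = bounded_words (Suc i)"
      using Suc.IH edge_transition[of "ed (\<tau> + i)" i] ed[of "\<tau> + i"] later[of "Suc (\<tau> + i)"] by auto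
    moreover have "follower_set G (tgt G (ed (\<tau> + Suc i))) \<noteq> bounded_words 0"
      using later[of "Suc (\<tau> + Suc i)"] ed by simp
    ultimately show ?case using edge_transition[of "ed (\<tau> + Suc i)" "Suc i"] ed by auto
  qed
  have "g (i + p) = g i" for i
    using reads[of "i + p"] reads[of i] yper[of "int (\<tau> + i)" 1] by (simp add: ac_simps)
  then show False using assms(1,2) unfolding periodic_seq_def by blast
qed

text \<open>Two returns of the path from the root to the root at times congruent modulo the period of y
  close a loop, and running around this loop forever is a lift of y that visits the root.\<close>
lemma lift_visiting_root:
  assumes np: "\<not> periodic_seq g" and p: "1 \<le> p" and yper: "\<And>t j. y (t + int p * j) = y t"
    and y: "y \<in> lex_shift g"
  obtains x where "x \<in> lifts y" "visits_root_in_past x"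
proof -
  obtain ed where "\<forall>n. (ed n \<in> edges G \<and> lab G (ed n) = y (int n) \<and> tgt G (ed n) = src G (ed (Suc n))) \<and>
      follower_set G (src G (ed n)) = word_follower_set (lex_shift g) (window y 0 n)"
    using forward_path_from_root[OF y] by blast
  then have ed: "\<And>n. ed n \<in> edges G \<and> lab G (ed n) = y (int n) \<and> tgt G (ed n) = src G (ed (Suc n))"
    and F: "\<And>n. follower_set G (src G (ed n)) = word_follower_set (lex_shift g) (window y 0 n)"
    by simp_all
  have "follower_set G (src G (ed 0)) = bounded_words 0"
    unfolding F by (simp add: window_def word_follower_set_def bounded_words_0)
  then have "\<exists>t\<ge>t0. follower_set G (src G (ed t)) = bounded_words 0" for t0
    using root_visited_infinitely_often[OF np p yper ed] by blast
  then have "infinite {t. follower_set G (src G (ed t)) = bounded_words 0}"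
    unfolding infinite_nat_iff_unbounded_le by simp
  then obtain a b where ab': "a \<in> {t. follower_set G (src G (ed t)) = bounded_words 0}"
    "b \<in> {t. follower_set G (src G (ed t)) = bounded_words 0}" "a < b" "a mod p = b mod p"
    by (rule infinite_congruent_pair[of _ p]) (use p in linarith)
  then have ab: "follower_set G (src G (ed a)) = bounded_words 0"
    "follower_set G (src G (ed b)) = bounded_words 0" "a < b" "a mod p = b mod p"
    by simp_all
  have "src G (ed a) \<in> verts G" "src G (ed b) \<in> verts G" using src_tgt_in_verts ed by blast+
  then have same: "src G (ed a) = src G (ed b)" using ab(1,2) by (intro eq_if_follower_set_eq) simp_all
  define L where "L = b - a"
  have "p dvd L" unfolding L_def using ab(3,4) mod_eq_dvd_iff_nat[of a b p] by simp
  then obtain c where c: "L = p * c" by (rule dvdE)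
  define x where "x t = ed (a + nat ((t - int a) mod int L))" for t
  have "x \<in> edge_shift G"
    unfolding x_def L_def using periodic_loop_edge_shift[of ed G a b] ed ab(3) same by blast
  moreover have "lab G (x t) = y t" for t
  proof -
    have "lab G (x t) = y (int a + (t - int a) mod int L)" unfolding x_def using ed ab(3) L_def by simp
    also have "int a + (t - int a) mod int L = t + int p * (- (int c * ((t - int a) div int L)))"
      unfolding c using minus_div_mult_eq_mod[of "t - int a" "int p * int c"] by (simp add: algebra_simps)
    also have "y \<dots> = y t" by (rule yper)
    finally show ?thesis .
  qed
  ultimately have "x \<in> lifts y" unfolding lifts_def cover_map_def by simp
  moreover have "visits_root_in_past x" unfolding visits_root_in_past_def
  proof
    fix T
    obtain t where "t \<le> T" "(t - int a) mod int L = 0"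
      using ex_le_mod_eq_0[of "int L" T "int a"] ab(3) unfolding L_def by auto
    moreover from this(2) have "follower_set_at x t = bounded_words 0"
      unfolding follower_set_at_def x_def using ab(1) by simp
    ultimately show "\<exists>t\<le>T. follower_set_at x t = bounded_words 0" by blast
  qed
  ultimately show ?thesis by (rule that)
qed

lemma two_lifts_if_not_periodic:
  assumes "\<not> periodic_seq g"
  shows "\<exists>y\<in>lex_shift g. card (lifts y) = 2"
proof -
  obtain p y x where p: "1 \<le> p" "\<And>t j. y (t + int p * j) = y t"
    and x: "x \<in> lifts y" "\<not> visits_root_in_past x"
    using lift_avoiding_root[OF assms] by metis
  have y: "y \<in> lex_shift g" using x(1) presents_G unfolding lifts_def by blast
  obtain x' where x': "x' \<in> lifts y" "visits_root_in_past x'"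
    by (rule lift_visiting_root[OF assms p y])
  have "x \<noteq> x'" using x(2) x'(2) by blast
  then have "2 \<le> card (lifts y)"
    using x(1) x'(1) finite_lifts card_mono[of "lifts y" "{x, x'}"] by simp
  then show ?thesis using card_lifts_le_2[of y] y by (intro bexI[of _ y]) simp_all
qed

lemma cover_map_multiplicity:
  "(periodic_seq g \<longrightarrow> one_to_one G) \<and> (\<not> periodic_seq g \<longrightarrow> two_to_one G (lex_shift g))"
proof (intro conjI impI)
  assume "periodic_seq g"
  then show "one_to_one G" by (rule one_to_one_if_periodic)
next
  assume "\<not> periodic_seq g"
  have "{x \<in> edge_shift G. cover_map G x = y} = lifts y" for y unfolding lifts_def by simp
  then show "two_to_one G (lex_shift g)"
    unfolding two_to_one_def using finite_lifts card_lifts_le_2 two_lifts_if_not_periodic[OF \<open>\<not> periodic_seq g\<close>]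
    by simp
qed

end

section \<open>The generating sequence of a beta-expansion\<close>

primrec beta_orbit :: "real \<Rightarrow> real \<Rightarrow> nat \<Rightarrow> real" where
  "beta_orbit b x 0 = x"
| "beta_orbit b x (Suc n) = frac (b * beta_orbit b x n)"

definition beta_digit :: "real \<Rightarrow> real \<Rightarrow> nat \<Rightarrow> int" where
  "beta_digit b x n = \<lfloor>b * beta_orbit b x n\<rfloor>"

lemma beta_r_eq_orbit: "beta_r b n = beta_orbit b 1 (Suc n)"
  by (induction n) auto

lemma beta_e_eq_digit: "beta_e b n = nat (beta_digit b 1 n)"
  by (cases n) (auto simp: beta_digit_def beta_r_eq_orbit)

lemma beta_orbit_add: "beta_orbit b (beta_orbit b x m) i = beta_orbit b x (m + i)"
  by (induction i) auto

lemma beta_digit_add: "beta_digit b (beta_orbit b x m) i = beta_digit b x (m + i)"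
  unfolding beta_digit_def beta_orbit_add ..

lemma beta_orbit_nonneg: "0 \<le> x \<Longrightarrow> 0 \<le> beta_orbit b x n"
  by (cases n) auto

lemma beta_orbit_Suc_less_1: "beta_orbit b x (Suc n) < 1"
  by (simp add: frac_lt_1)

lemma beta_digit_nonneg: "0 \<le> x \<Longrightarrow> 0 < b \<Longrightarrow> 0 \<le> beta_digit b x n"
  unfolding beta_digit_def using beta_orbit_nonneg[of x b n] by simp

lemma beta_orbit_diff:
  assumes "\<forall>i<n. beta_digit b x i = beta_digit b y i"
  shows "beta_orbit b y n - beta_orbit b x n = b ^ n * (y - x)"
  using assms
proof (induction n)
  case 0 then show ?case by simp
next
  case (Suc n)
  then have IH: "beta_orbit b y n - beta_orbit b x n = b ^ n * (y - x)" by simp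
  have d: "\<lfloor>b * beta_orbit b x n\<rfloor> = \<lfloor>b * beta_orbit b y n\<rfloor>" using Suc.prems unfolding beta_digit_def by simp
  have "beta_orbit b y (Suc n) - beta_orbit b x (Suc n) =
      (b * beta_orbit b y n - of_int \<lfloor>b * beta_orbit b y n\<rfloor>) - (b * beta_orbit b x n - of_int \<lfloor>b * beta_orbit b x n\<rfloor>)"
    by (simp add: frac_def)
  also have "\<dots> = b * (beta_orbit b y n - beta_orbit b x n)" using d by (simp add: algebra_simps)
  also have "\<dots> = b ^ Suc n * (y - x)" using IH by simp
  finally show ?case .
qed

text \<open>While the digits agree, the beta-transformation multiplies the distance of the two orbits by b,
  so they cannot agree forever.\<close>
lemma beta_digit_lex_less:
  assumes b: "1 < b" and x: "0 \<le> x" and xy: "x < y"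
  shows "\<exists>n. (\<forall>i<n. beta_digit b x i = beta_digit b y i) \<and> beta_digit b x n < beta_digit b y n"
proof (rule ccontr)
  assume na: "\<not> ?thesis"
  have alleq: "\<forall>i<n. beta_digit b x i = beta_digit b y i" for n
  proof (induction n)
    case 0 then show ?case by simp
  next
    case (Suc n)
    have "beta_orbit b y n - beta_orbit b x n = b ^ n * (y - x)" using beta_orbit_diff[OF Suc.IH] .
    moreover have "0 < b ^ n * (y - x)" using b xy by simp
    ultimately have "beta_orbit b x n < beta_orbit b y n" by simp
    then have "b * beta_orbit b x n \<le> b * beta_orbit b y n" using b by simp
    then have "beta_digit b x n \<le> beta_digit b y n" unfolding beta_digit_def by (rule floor_mono)
    moreover have "\<not> beta_digit b x n < beta_digit b y n" using na Suc.IH by blast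
    ultimately have "beta_digit b x n = beta_digit b y n" by simp
    then show ?case using Suc.IH less_Suc_eq by auto
  qed
  obtain n where n: "1 / (y - x) < b ^ n" using real_arch_pow[OF b] by blast
  have "1 / (y - x) < b ^ Suc n"
  proof -
    have "b ^ n \<le> b ^ Suc n" using b by simp
    then show ?thesis using n by simp
  qed
  then have h1: "1 < b ^ Suc n * (y - x)" using xy by (simp add: field_simps)
  have h2: "beta_orbit b y (Suc n) - beta_orbit b x (Suc n) = b ^ Suc n * (y - x)" by (rule beta_orbit_diff[OF alleq])
  have h3: "beta_orbit b y (Suc n) < 1" by (rule beta_orbit_Suc_less_1)
  have h4: "0 \<le> beta_orbit b x (Suc n)" by (rule beta_orbit_nonneg[OF x])
  show False using h1 h2 h3 h4 by linarith
qed

text \<open>Parry's condition: the m-th suffix of the expansion of 1 is the expansion of its m-th image,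
  a number smaller than 1.\<close>
lemma beta_e_suffix_less:
  assumes b: "1 < b" and m: "1 \<le> m"
  shows "\<exists>n. (\<forall>i<n. beta_e b (m + i) = beta_e b i) \<and> beta_e b (m + n) < beta_e b n"
proof -
  obtain m' where m': "m = Suc m'" using m by (cases m) auto
  define x where "x = beta_orbit b 1 m"
  have x0: "0 \<le> x" unfolding x_def by (simp add: beta_orbit_nonneg)
  have x1: "x < 1" unfolding x_def m' by (rule beta_orbit_Suc_less_1)
  obtain n where n: "\<forall>i<n. beta_digit b x i = beta_digit b 1 i" "beta_digit b x n < beta_digit b 1 n"
    using beta_digit_lex_less[OF b x0 x1] by auto
  have dx: "beta_digit b x i = beta_digit b 1 (m + i)" for i unfolding x_def by (rule beta_digit_add)
  have nn: "0 \<le> beta_digit b x i" for i using beta_digit_nonneg[OF x0] b by simp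
  show ?thesis
  proof (intro exI[of _ n] conjI allI impI)
    fix i assume "i < n"
    then show "beta_e b (m + i) = beta_e b i" using n(1) dx unfolding beta_e_eq_digit by metis
  next
    show "beta_e b (m + n) < beta_e b n" using n(2) dx[of n] nn[of n] unfolding beta_e_eq_digit by simp
  qed
qed

lemma beta_e_Suc_eq_0_if_frac_eq_0:
  assumes "frac b = 0"
  shows "beta_e b (Suc n) = 0"
proof -
  have "beta_r b n = 0" for n using assms by (induction n) auto
  then show ?thesis by simp
qed

lemma beta_e_Suc_nonzero_if_frac_pos:
  assumes b: "1 < b" and f: "0 < frac b"
  shows "\<exists>n. beta_e b (Suc n) \<noteq> 0"
proof (rule ccontr)
  assume "\<not> ?thesis"
  then have z: "\<And>n. beta_e b (Suc n) = 0" by blast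
  have r0: "0 \<le> beta_r b n" for n by (cases n) auto
  have lt: "b * beta_r b n < 1" for n
  proof -
    have "nat \<lfloor>b * beta_r b n\<rfloor> = 0" using z[of n] by simp
    then have "\<lfloor>b * beta_r b n\<rfloor> \<le> 0" by simp
    then show ?thesis by linarith
  qed
  have pw: "beta_r b n = b ^ n * frac b" for n
  proof (induction n)
    case 0 then show ?case by simp
  next
    case (Suc n)
    have "0 \<le> b * beta_r b n" using b r0[of n] by simp
    then have "beta_r b (Suc n) = b * beta_r b n" using lt[of n] by (simp add: frac_eq)
    then show ?case using Suc.IH by simp
  qed
  obtain n where n: "1 / frac b < b ^ n" using real_arch_pow[OF b] by blast
  then have "1 < b ^ n * frac b" using f by (simp add: field_simps)
  moreover have "beta_r b n < 1" by (cases n) (simp_all only: beta_r.simps frac_lt_1)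
  ultimately show False using pw by simp
qed

lemma lex_le_suffix_beta_e:
  assumes "1 < b"
  shows "lex_le (suffix m (beta_e b)) (beta_e b)"
proof (cases "m = 0")
  case False
  then obtain n where "\<forall>i<n. beta_e b (m + i) = beta_e b i" "beta_e b (m + n) < beta_e b n"
    using beta_e_suffix_less[OF assms, of m] by auto
  then show ?thesis unfolding lex_le_def by (intro disjI2 exI[of _ n]) auto
qed simp

text \<open>In the notation of the paper, (e 0 ... e (K - 1) (e K - 1)) repeated forever.\<close>
definition lowered_period :: "(nat \<Rightarrow> nat) \<Rightarrow> nat \<Rightarrow> nat \<Rightarrow> nat" where
  "lowered_period e K n = (if n mod Suc K = K then e K - 1 else e (n mod Suc K))"

lemma lowered_period_add_mult [simp]: "lowered_period e K (n + j * Suc K) = lowered_period e K n"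
proof -
  have "(n + j * Suc K) mod Suc K = n mod Suc K" by (rule mod_mult_self1)
  then show ?thesis unfolding lowered_period_def by (simp only:)
qed

lemma suffix_lowered_period_mod: "suffix m (lowered_period e K) = suffix (m mod Suc K) (lowered_period e K)"
proof
  fix i
  have "m + i = (m mod Suc K + i) + m div Suc K * Suc K" using mod_div_mult_eq[of m "Suc K"] by linarith
  then show "suffix m (lowered_period e K) i = suffix (m mod Suc K) (lowered_period e K) i"
    by (metis lowered_period_add_mult suffix_nth)
qed

text \<open>If e is strictly greater than each of its proper suffixes, the lowered period dominates its
  suffixes: a suffix of the period first differs from e either inside the period, or reaches its
  last letter e K - 1, which is smaller than the letter of e it is compared to.\<close>
lemma lex_le_suffix_lowered_period:
  assumes suffix_less: "\<And>m. 1 \<le> m \<Longrightarrow> \<exists>n. (\<forall>i<n. e (m + i) = e i) \<and> e (m + n) < e n"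
    and "e K \<noteq> 0"
  shows "lex_le (suffix m (lowered_period e K)) (lowered_period e K)"
proof (cases "m mod Suc K = 0")
  case True
  then show ?thesis using suffix_lowered_period_mod[of m e K] by simp
next
  case False
  define m' where "m' = m mod Suc K"
  have m': "1 \<le> m'" "m' \<le> K" unfolding m'_def using False by (auto simp: less_Suc_eq_le)
  have small: "lowered_period e K n = e n" if "n < K" for n
    unfolding lowered_period_def using that by simp
  obtain j where j: "\<forall>i<j. e (m' + i) = e i" "e (m' + j) < e j" using suffix_less[OF m'(1)] by blast
  define w where "w = min j (K - m')"
  have below: "suffix m' (lowered_period e K) i = lowered_period e K i" if "i < w" for i
  proof -
    have "m' + i < K" "i < K" "i < j" using that m' unfolding w_def by auto
    then show ?thesis using j(1) small by simp
  qed
  have at: "suffix m' (lowered_period e K) w < lowered_period e K w"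
  proof (cases "j < K - m'")
    case True
    then show ?thesis using j(2) small unfolding w_def by simp
  next
    case False
    have "e K \<le> e (K - m')"
    proof (cases "j = K - m'")
      case True then show ?thesis using j(2) m' by simp
    next
      case False then have "K - m' < j" using \<open>\<not> j < K - m'\<close> by simp
      then show ?thesis using j(1) m' by (metis le_add_diff_inverse order.refl)
    qed
    moreover have w: "w = K - m'" using False unfolding w_def by simp
    moreover have "suffix m' (lowered_period e K) w = e K - 1"
      unfolding w using m' by (simp add: lowered_period_def)
    moreover have "lowered_period e K w = e (K - m')" unfolding w using m' small by simp
    ultimately show ?thesis using assms(2) by simp
  qed
  have "lex_le (suffix m' (lowered_period e K)) (lowered_period e K)"
    unfolding lex_le_def using below at by blast
  then show ?thesis using suffix_lowered_period_mod[of m e K] unfolding m'_def by simp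
qed

lemma floor_less_ceiling_if_frac_pos:
  assumes "0 < frac b"
  shows "\<lfloor>b\<rfloor> < \<lceil>b\<rceil>"
proof -
  have "of_int \<lfloor>b\<rfloor> < b" using assms unfolding frac_def by simp
  also have "b \<le> of_int \<lceil>b\<rceil>" by (rule le_of_int_ceiling)
  finally show ?thesis by simp
qed

lemma frac_pos_if_beta_e_Suc_nonzero:
  assumes "beta_e b (Suc n) \<noteq> 0"
  shows "0 < frac b"
proof (rule ccontr)
  assume "\<not> 0 < frac b"
  then have "frac b = 0" using frac_ge_0[of b] by linarith
  then have "beta_e b (Suc n) = 0" by (rule beta_e_Suc_eq_0_if_frac_eq_0)
  with assms show False by (simp del: beta_e.simps)
qed

lemma gen_seq_infinite: "infinite {n. beta_e b n \<noteq> 0} \<Longrightarrow> gen_seq b = beta_e b"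
  unfolding gen_seq_def by simp

lemma gen_seq_finite:
  "finite {n. beta_e b n \<noteq> 0} \<Longrightarrow> gen_seq b = lowered_period (beta_e b) (Max {n. beta_e b n \<noteq> 0})"
  unfolding gen_seq_def lowered_period_def Let_def by (simp add: fun_eq_iff)

lemma gen_seq_suffix_lex_le:
  assumes "1 < b"
  shows "lex_le (suffix m (gen_seq b)) (gen_seq b)"
proof (cases "finite {n. beta_e b n \<noteq> 0}")
  case True
  have "beta_e b 0 \<noteq> 0" using assms by simp
  then have "beta_e b (Max {n. beta_e b n \<noteq> 0}) \<noteq> 0" using Max_in[OF True] by blast
  then show ?thesis
    unfolding gen_seq_finite[OF True] using beta_e_suffix_less[OF assms]
    by (intro lex_le_suffix_lowered_period) auto
qed (simp add: gen_seq_infinite lex_le_suffix_beta_e[OF assms])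

lemma gen_seq_first:
  assumes "1 < b"
  shows "0 < gen_seq b 0 \<and> int (gen_seq b 0) < \<lceil>b\<rceil>"
proof (cases "finite {n. beta_e b n \<noteq> 0}")
  case False
  then obtain j where "1 \<le> j" "beta_e b j \<noteq> 0" unfolding infinite_nat_iff_unbounded_le by blast
  then have "beta_e b (Suc (j - 1)) \<noteq> 0" by (simp del: beta_e.simps)
  then have "0 < frac b" by (rule frac_pos_if_beta_e_Suc_nonzero)
  then show ?thesis using False assms floor_less_ceiling_if_frac_pos by (simp add: gen_seq_infinite)
next
  case True
  define K where "K = Max {n. beta_e b n \<noteq> 0}"
  have "beta_e b 0 \<noteq> 0" using assms by simp
  then have "K \<in> {n. beta_e b n \<noteq> 0}" unfolding K_def using Max_in[OF True] by blast
  then have eK: "beta_e b K \<noteq> 0" by simp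
  have after: "beta_e b n = 0" if "K < n" for n
  proof (rule ccontr)
    assume "beta_e b n \<noteq> 0"
    then have "n \<le> K" unfolding K_def using Max_ge[OF True] by simp
    with that show False by simp
  qed
  have g0: "gen_seq b 0 = lowered_period (beta_e b) K 0" unfolding gen_seq_finite[OF True] K_def ..
  show ?thesis
  proof (cases "K = 0")
    case True
    have "\<not> 0 < frac b"
    proof
      assume "0 < frac b"
      then obtain n where "beta_e b (Suc n) \<noteq> 0" using beta_e_Suc_nonzero_if_frac_pos[OF assms] by blast
      then show False using after[of "Suc n"] True by (simp del: beta_e.simps)
    qed
    then have "of_int \<lfloor>b\<rfloor> = b" using frac_ge_0[of b] unfolding frac_def by linarith
    then have ceil: "\<lceil>b\<rceil> = \<lfloor>b\<rfloor>" and floor: "1 < \<lfloor>b\<rfloor>" using assms by (metis ceiling_of_int, linarith)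
    define k where "k = nat \<lfloor>b\<rfloor>"
    have k: "\<lfloor>b\<rfloor> = int k" "2 \<le> k" using floor unfolding k_def by (auto simp: le_nat_iff)
    have "gen_seq b 0 = nat \<lfloor>b\<rfloor> - 1" using True g0 by (simp add: lowered_period_def)
    then have "int (gen_seq b 0) = \<lfloor>b\<rfloor> - 1" using k by (simp add: of_nat_diff)
    then show ?thesis using ceil k by linarith
  next
    case False
    then have "beta_e b (Suc (K - 1)) \<noteq> 0" using eK by (simp del: beta_e.simps)
    then have "0 < frac b" by (rule frac_pos_if_beta_e_Suc_nonzero)
    then show ?thesis using False assms g0 floor_less_ceiling_if_frac_pos by (simp add: lowered_period_def)
  qed
qed

lemma gen_seq_nonzero_infinitely_often:
  assumes "1 < b"
  shows "\<exists>j\<ge>n. 0 < gen_seq b j"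
proof (cases "finite {n. beta_e b n \<noteq> 0}")
  case True
  define K where "K = Max {n. beta_e b n \<noteq> 0}"
  have "gen_seq b (0 + n * Suc K) = gen_seq b 0"
    unfolding gen_seq_finite[OF True] K_def[symmetric] by (rule lowered_period_add_mult)
  then show ?thesis using gen_seq_first[OF assms] by (intro exI[of _ "n * Suc K"]) simp
next
  case False
  then obtain j where j: "n \<le> j" "beta_e b j \<noteq> 0" unfolding infinite_nat_iff_unbounded_le by blast
  then show ?thesis unfolding gen_seq_infinite[OF False] by (intro exI[of _ j]) simp
qed

lemma beta_shift_eq_lex_shift:
  assumes "1 < b"
  shows "beta_shift b = lex_shift (gen_seq b)"
proof -
  have "int (y k) < \<lceil>b\<rceil>" if "y \<in> lex_shift (gen_seq b)" for y k
  proof -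
    have "lex_le (right_ray y k) (gen_seq b)" using that unfolding lex_shift_def by simp
    then have "y k \<le> gen_seq b 0" using lex_le_unfold[of "right_ray y k" "gen_seq b"] by (auto simp: right_ray_def)
    then show ?thesis using gen_seq_first[OF assms] by linarith
  qed
  then show ?thesis unfolding beta_shift_def lex_shift_def right_ray_def by auto
qed

theorem proposition3p3:
  fixes \<beta> :: real and G :: lgraph
  assumes "\<beta> > 1"
    and "eventually_periodic_seq (gen_seq \<beta>)"
    and "right_fischer_cover (beta_shift \<beta>) G"
  shows "(periodic_seq (gen_seq \<beta>) \<longrightarrow> one_to_one G) \<and>
         (\<not> periodic_seq (gen_seq \<beta>) \<longrightarrow> two_to_one G (beta_shift \<beta>))"
proof -
  interpret lex_shift_fischer_cover "gen_seq \<beta>" G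
  proof
    show "\<And>m. lex_le (suffix m (gen_seq \<beta>)) (gen_seq \<beta>)"
      by (rule gen_seq_suffix_lex_le[OF assms(1)])
    show "\<And>n. \<exists>j\<ge>n. 0 < gen_seq \<beta> j"
      by (rule gen_seq_nonzero_infinitely_often[OF assms(1)])
    show "eventually_periodic_seq (gen_seq \<beta>)" by (rule assms(2))
    show "right_fischer_cover (lex_shift (gen_seq \<beta>)) G"
      using assms(3) beta_shift_eq_lex_shift[OF assms(1)] by simp
  qed
  show ?thesis using cover_map_multiplicity beta_shift_eq_lex_shift[OF assms(1)] by simp
qed

end
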